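(* Let $G$ be a finite simple graph with $s$ vertices $t_1,\dots,t_s$ and let $I_c(G)\subset S=K[t_1,\ldots,t_s]$ be its ideal of covers. If ${\rm v}(I_c(G))=s-2$, then (a) $I_c(G)$ is Cohen–Macaulay; (b) ${\rm v}_{\mathfrak p}(I_c(G))=s-2$ for every $\mathfrak p\in{\rm Ass}(I_c(G))$; (c) $(I_c(G)\colon\mathfrak p)/I_c(G)$ is a principal ideal of $S/I_c(G)$ for every $\mathfrak p\in{\rm Ass}(I_c(G))$.
   Context: $K$ is a field, $S$ has the standard grading. The ideal of covers $I_c(G)$ is generated by $\prod_{t_i\in C}t_i$ over all minimal vertex covers $C$ of $G$ (a vertex cover is a subset of $V(G)$ meeting every edge). For a graded ideal $I$, ${\rm v}(I)=\min\{d\ge0:\exists f\in S_d,\ \exists\mathfrak p\in{\rm Ass}(I),\ (I\colon f)=\mathfrak p\}$, and for $\mathfrak p\in{\rm Ass}(I)$, ${\rm v}_{\mathfrak p}(I)=\min\{d\ge0:\exists f\in S_d,\ (I\colon f)=\mathfrak p\}$. An ideal $I$ is Cohen–Macaulay if ${\rm pd}_S(S/I)={\rm ht}(I)$. *)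

theory Defs
  imports "HOL-Library.Poly_Mapping" "HOL-Library.Extended_Nat"
begin

type_synonym ('v, 'k) mpoly = "('v \<Rightarrow>\<^sub>0 nat) \<Rightarrow>\<^sub>0 'k"

definition Var :: "'v \<Rightarrow> ('v, 'k::field) mpoly" where
  "Var i = Poly_Mapping.single (Poly_Mapping.single i 1) 1"

definition mdeg :: "('v \<Rightarrow>\<^sub>0 nat) \<Rightarrow> nat" where
  "mdeg m = (\<Sum>i\<in>Poly_Mapping.keys m. Poly_Mapping.lookup m i)"

definition homog :: "nat \<Rightarrow> ('v, 'k::field) mpoly set" where
  "homog d = {f. \<forall>m\<in>Poly_Mapping.keys f. mdeg m = d}"

definition is_ideal :: "'a::comm_ring_1 set \<Rightarrow> bool" where
  "is_ideal I \<longleftrightarrow> 0 \<in> I \<and> (\<forall>a\<in>I. \<forall>b\<in>I. a + b \<in> I) \<and> (\<forall>a\<in>I. \<forall>r. r * a \<in> I)"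

definition ideal_gen :: "'a::comm_ring_1 set \<Rightarrow> 'a set" where
  "ideal_gen G = \<Inter>{I. is_ideal I \<and> G \<subseteq> I}"

definition is_prime_ideal :: "'a::comm_ring_1 set \<Rightarrow> bool" where
  "is_prime_ideal P \<longleftrightarrow> is_ideal P \<and> P \<noteq> UNIV \<and> (\<forall>a b. a * b \<in> P \<longrightarrow> a \<in> P \<or> b \<in> P)"

definition colon :: "'a::comm_ring_1 set \<Rightarrow> 'a set \<Rightarrow> 'a set" where
  "colon I J = {f. \<forall>g\<in>J. f * g \<in> I}"

definition colon_elem :: "'a::comm_ring_1 set \<Rightarrow> 'a \<Rightarrow> 'a set" where
  "colon_elem I f = {g. g * f \<in> I}"

definition Ass :: "'a::comm_ring_1 set \<Rightarrow> 'a set set" where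
  "Ass I = {P. is_prime_ideal P \<and> (\<exists>f. colon_elem I f = P)}"

section \<open>v-number (as an extended natural; \<infinity> if Ass I is empty)\<close>

definition v_number :: "('v, 'k::field) mpoly set \<Rightarrow> enat" where
  "v_number I = (INF d\<in>{d. \<exists>f\<in>homog d. \<exists>P\<in>Ass I. colon_elem I f = P}. enat d)"

definition v_number_at :: "('v, 'k::field) mpoly set \<Rightarrow> ('v, 'k) mpoly set \<Rightarrow> enat" where
  "v_number_at I P = (INF d\<in>{d. \<exists>f\<in>homog d. colon_elem I f = P}. enat d)"

definition prime_height :: "'a::comm_ring_1 set \<Rightarrow> enat" where
  "prime_height P = (SUP n\<in>{n. \<exists>c::nat \<Rightarrow> 'a set. c n = P \<and> (\<forall>i\<le>n. is_prime_ideal (c i))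
                                   \<and> (\<forall>i<n. c i \<subset> c (Suc i))}. enat n)"

definition height :: "'a::comm_ring_1 set \<Rightarrow> enat" where
  "height I = (INF P\<in>{P. is_prime_ideal P \<and> I \<subseteq> P}. prime_height P)"

text \<open>Elements of the free module F = R^b are vectors nat => R vanishing from index b on.
  A matrix M :: nat => nat => R represents the map R^b -> R^b' given by x |-> M x.\<close>

definition free_mod :: "nat \<Rightarrow> (nat \<Rightarrow> 'a::comm_ring_1) set" where
  "free_mod b = {x. \<forall>k\<ge>b. x k = 0}"

definition mat_app :: "nat \<Rightarrow> nat \<Rightarrow> (nat \<Rightarrow> nat \<Rightarrow> 'a::comm_ring_1) \<Rightarrow> (nat \<Rightarrow> 'a) \<Rightarrow> (nat \<Rightarrow> 'a)" where
  "mat_app b' b M x = (\<lambda>j. if j < b' then (\<Sum>k<b. M j k * x k) else 0)"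

text \<open>A free resolution of length n of S/I:
   0 -> F_n -> ... -> F_1 -> F_0 = R -> R/I -> 0, with ranks r i (r 0 = 1) and
   differentials d i : F_i -> F_(i-1) for 1 <= i <= n.  The kernel of the augmentation
   F_0 -> R/I is I (embedded as vectors supported at index 0); exactness means that the
   kernel at each position i <= n equals the image of d (i+1) for i < n, and is 0 for i = n.\<close>

definition kernel_at :: "'a::comm_ring_1 set \<Rightarrow> (nat \<Rightarrow> nat) \<Rightarrow> (nat \<Rightarrow> nat \<Rightarrow> nat \<Rightarrow> 'a) \<Rightarrow> nat \<Rightarrow> (nat \<Rightarrow> 'a) set" where
  "kernel_at I r d i =
     (if i = 0 then {x \<in> free_mod 1. x 0 \<in> I}
      else {x \<in> free_mod (r i). mat_app (r (i - 1)) (r i) (d i) x = (\<lambda>_. 0)})"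

definition image_at :: "(nat \<Rightarrow> nat) \<Rightarrow> (nat \<Rightarrow> nat \<Rightarrow> nat \<Rightarrow> 'a::comm_ring_1) \<Rightarrow> nat \<Rightarrow> (nat \<Rightarrow> 'a) set" where
  "image_at r d i = mat_app (r (i - 1)) (r i) (d i) ` free_mod (r i)"

definition is_free_resolution :: "'a::comm_ring_1 set \<Rightarrow> nat \<Rightarrow> (nat \<Rightarrow> nat) \<Rightarrow> (nat \<Rightarrow> nat \<Rightarrow> nat \<Rightarrow> 'a) \<Rightarrow> bool" where
  "is_free_resolution I n r d \<longleftrightarrow> r 0 = 1 \<and>
     (\<forall>i<n. kernel_at I r d i = image_at r d (Suc i)) \<and> kernel_at I r d n = {\<lambda>_. 0}"

definition proj_dim_quot :: "'a::comm_ring_1 set \<Rightarrow> enat" where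
  "proj_dim_quot I = (INF n\<in>{n. \<exists>r d. is_free_resolution I n r d}. enat n)"

definition cohen_macaulay :: "'a::comm_ring_1 set \<Rightarrow> bool" where
  "cohen_macaulay I \<longleftrightarrow> proj_dim_quot I = height I"

text \<open>A finite simple graph on the vertex set UNIV :: 'v set (with 'v finite):
  a set of edges, each a 2-element set of vertices.\<close>

definition simple_graph :: "'v set set \<Rightarrow> bool" where
  "simple_graph E \<longleftrightarrow> (\<forall>e\<in>E. card e = 2)"

definition vertex_cover :: "'v set set \<Rightarrow> 'v set \<Rightarrow> bool" where
  "vertex_cover E C \<longleftrightarrow> (\<forall>e\<in>E. e \<inter> C \<noteq> {})"

definition min_vertex_cover :: "'v set set \<Rightarrow> 'v set \<Rightarrow> bool" where
  "min_vertex_cover E C \<longleftrightarrow> vertex_cover E C \<and> (\<forall>C'. C' \<subset> C \<longrightarrow> \<not> vertex_cover E C')"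

definition cover_ideal :: "'v set set \<Rightarrow> ('v, 'k::field) mpoly set" where
  "cover_ideal E = ideal_gen {(\<Prod>i\<in>C. Var i) | C. min_vertex_cover E C}"

end

theory Submission
  imports Defs "HOL-Library.Countable"
begin

(* The cover ideal I is the intersection of the primes P_e = (t_a, t_b) over the edges
   e = {a, b}, and these are its associated primes: (I : t^(V - e)) = P_e.  If for some edge e
   and vertex k outside e no other edge lies in e \<union> {k}, then already (I : t^(V - e - k)) = P_e,
   so v(I) \<le> s - 3.  Hence v(I) = s - 2 forces every edge to be a dominating set.  This gives
   (b) at once, and (c) with generator t^(V - e).  It also makes the complements of the minimal
   vertex covers C_1, ..., C_r pairwise disjoint, so that the syzygies of the generators t^C_j
   are generated by the consecutive ones t^(V - C_j) e_j - t^(V - C_j+1) e_j+1.  This yields a free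
   resolution 0 \<rightarrow> S^(r-1) \<rightarrow> S^r \<rightarrow> S of length 2, and pd(S/I) = 2 because I is not principal.
   Finally every P_e has height 2, computed by pseudo-division in one variable. *)

abbreviation lookup :: "('a \<Rightarrow>\<^sub>0 'b::zero) \<Rightarrow> 'a \<Rightarrow> 'b" where
  "lookup \<equiv> Poly_Mapping.lookup"

abbreviation keys :: "('a \<Rightarrow>\<^sub>0 'b::zero) \<Rightarrow> 'a set" where
  "keys \<equiv> Poly_Mapping.keys"

abbreviation single :: "'a \<Rightarrow> 'b \<Rightarrow> 'a \<Rightarrow>\<^sub>0 'b::zero" where
  "single \<equiv> Poly_Mapping.single"

section \<open>Monoid rings without zero divisors\<close>

lemma poly_mapping_sum_single: "p = (\<Sum>n\<in>keys p. single n (lookup p n))"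
proof (rule poly_mapping_eqI)
  fix k
  have "lookup (\<Sum>n\<in>keys p. single n (lookup p n)) k = (\<Sum>n\<in>keys p. (lookup p n when n = k))"
    by (simp add: lookup_sum lookup_single)
  also have "\<dots> = lookup p k"
    by (cases "k \<in> keys p") (auto simp: when_def in_keys_iff)
  finally show "lookup p k = lookup (\<Sum>n\<in>keys p. single n (lookup p n)) k" by simp
qed

lemma lookup_times_keys:
  fixes p q :: "'a::comm_monoid_add \<Rightarrow>\<^sub>0 'b::comm_semiring_0"
  shows "lookup (p * q) k =
    (\<Sum>l\<in>keys p. \<Sum>m\<in>keys q. (lookup p l * lookup q m when l + m = k))"
proof -
  have "p * q = (\<Sum>l\<in>keys p. single l (lookup p l)) * (\<Sum>m\<in>keys q. single m (lookup q m))"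
    using poly_mapping_sum_single[of p] poly_mapping_sum_single[of q] by simp
  also have "\<dots> = (\<Sum>l\<in>keys p. \<Sum>m\<in>keys q. single (l + m) (lookup p l * lookup q m))"
    by (simp add: sum_product mult_single)
  finally show ?thesis by (simp add: lookup_sum lookup_single)
qed

text \<open>The library proves the absence of zero divisors only for linearly ordered exponent monoids.
  An additive injection into such a monoid suffices: the product of the two terms of maximal
  weight cannot cancel.\<close>

lemma times_poly_mapping_neq_zero:
  fixes p q :: "'a::comm_monoid_add \<Rightarrow>\<^sub>0 'b::{comm_semiring_0, semiring_no_zero_divisors}"
    and \<phi> :: "'a \<Rightarrow> 'c::linordered_cancel_ab_semigroup_add"
  assumes inj: "inj \<phi>" and add: "\<And>a b. \<phi> (a + b) = \<phi> a + \<phi> b"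
    and "p \<noteq> 0" "q \<noteq> 0"
  shows "p * q \<noteq> 0"
proof -
  let ?F = "keys p" and ?G = "keys q"
  have F: "finite ?F" "?F \<noteq> {}" and G: "finite ?G" "?G \<noteq> {}" using assms by auto
  have "Max (\<phi> ` ?F) \<in> \<phi> ` ?F" using F by simp
  then obtain a0 where a0: "a0 \<in> ?F" "\<phi> a0 = Max (\<phi> ` ?F)" by auto
  then have a0_max: "\<phi> a \<le> \<phi> a0" if "a \<in> ?F" for a
    using F(1) that by simp
  have "Max (\<phi> ` ?G) \<in> \<phi> ` ?G" using G by simp
  then obtain b0 where b0: "b0 \<in> ?G" "\<phi> b0 = Max (\<phi> ` ?G)" by auto
  then have b0_max: "\<phi> b \<le> \<phi> b0" if "b \<in> ?G" for b
    using G(1) that by simp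
  have unique: "a = a0 \<and> b = b0" if "a \<in> ?F" "b \<in> ?G" "a + b = a0 + b0" for a b
  proof -
    have sum: "\<phi> a + \<phi> b = \<phi> a0 + \<phi> b0" using that add by metis
    have "\<phi> a = \<phi> a0"
    proof (rule ccontr)
      assume "\<phi> a \<noteq> \<phi> a0"
      with a0_max[OF that(1)] have "\<phi> a + \<phi> b < \<phi> a0 + \<phi> b0"
        using b0_max[OF that(2)] by (simp add: add_less_le_mono)
      with sum show False by simp
    qed
    with sum have "\<phi> b = \<phi> b0" by simp
    with \<open>\<phi> a = \<phi> a0\<close> show ?thesis using injD[OF inj] by blast
  qed
  have "lookup (p * q) (a0 + b0) =
      (\<Sum>l\<in>?F. \<Sum>m\<in>?G. (lookup p l * lookup q m when l = a0 \<and> m = b0))"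
    unfolding lookup_times_keys
    by (intro sum.cong refl) (use unique in \<open>auto simp: when_def\<close>)
  also have "\<dots> = (\<Sum>l\<in>?F. if l = a0 then lookup p a0 * lookup q b0 else 0)"
    using b0(1) G(1) by (intro sum.cong refl) (auto simp: when_def)
  also have "\<dots> = lookup p a0 * lookup q b0"
    using a0(1) F(1) by simp
  also have "\<dots> \<noteq> 0" using a0(1) b0(1) by (simp add: in_keys_iff)
  finally show ?thesis by auto
qed

definition exp_to_nat :: "('v::countable \<Rightarrow>\<^sub>0 nat) \<Rightarrow> (nat \<Rightarrow>\<^sub>0 nat)" where
  "exp_to_nat n =
    Abs_poly_mapping (\<lambda>i. if i \<in> range (to_nat :: 'v \<Rightarrow> nat) then lookup n (from_nat i) else 0)"

lemma lookup_exp_to_nat: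
  fixes n :: "'v::countable \<Rightarrow>\<^sub>0 nat"
  shows "lookup (exp_to_nat n) i =
    (if i \<in> range (to_nat :: 'v \<Rightarrow> nat) then lookup n (from_nat i) else 0)"
proof -
  have "{i. (if i \<in> range (to_nat :: 'v \<Rightarrow> nat) then lookup n (from_nat i) else 0) \<noteq> 0}
      \<subseteq> to_nat ` keys n"
    by (auto simp: in_keys_iff)
  then have "finite {i. (if i \<in> range (to_nat :: 'v \<Rightarrow> nat) then lookup n (from_nat i) else 0) \<noteq> 0}"
    by (rule finite_subset) simp
  then show ?thesis unfolding exp_to_nat_def by simp
qed

lemma exp_to_nat_add: "exp_to_nat (a + b) = exp_to_nat a + exp_to_nat b"
  by (rule poly_mapping_eqI) (simp add: lookup_exp_to_nat lookup_add)

lemma inj_exp_to_nat: "inj exp_to_nat"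
proof (rule injI)
  fix a b :: "'v::countable \<Rightarrow>\<^sub>0 nat"
  assume "exp_to_nat a = exp_to_nat b"
  then have at_to_nat: "lookup (exp_to_nat a) (to_nat v) = lookup (exp_to_nat b) (to_nat v)" for v
    by simp
  have "lookup a v = lookup b v" for v
    using at_to_nat[of v] by (simp add: lookup_exp_to_nat)
  then show "a = b" by (rule poly_mapping_eqI)
qed

lemma mpoly_mult_eq_0_iff:
  fixes p q :: "('v::countable, 'k::field) mpoly"
  shows "p * q = 0 \<longleftrightarrow> p = 0 \<or> q = 0"
  using times_poly_mapping_neq_zero[OF inj_exp_to_nat exp_to_nat_add, of p q] by auto

lemma mpoly_power_neq_0:
  fixes p :: "('v::countable, 'k::field) mpoly"
  shows "p \<noteq> 0 \<Longrightarrow> p ^ k \<noteq> 0"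
  by (induction k) (auto simp: mpoly_mult_eq_0_iff)

lemma single_eq_0_iff: "single m c = 0 \<longleftrightarrow> c = 0"
  by (metis lookup_single_eq lookup_zero single_zero)

definition exp_dvd :: "('v \<Rightarrow>\<^sub>0 nat) \<Rightarrow> ('v \<Rightarrow>\<^sub>0 nat) \<Rightarrow> bool" where
  "exp_dvd m n \<longleftrightarrow> (\<forall>v. lookup m v \<le> lookup n v)"

lemma exp_dvd_add: "exp_dvd m (m + n)" "exp_dvd n (m + n)"
  by (auto simp: exp_dvd_def lookup_add)

lemma exp_dvd_trans: "exp_dvd a b \<Longrightarrow> exp_dvd b c \<Longrightarrow> exp_dvd a c"
  unfolding exp_dvd_def using order_trans by blast

lemma exp_dvd_keys: "exp_dvd m n \<Longrightarrow> keys m \<subseteq> keys n"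
  unfolding exp_dvd_def by (auto simp: in_keys_iff) (metis gr0I leD)

lemma exp_dvd_add_diff: "exp_dvd m n \<Longrightarrow> m + (n - m) = n"
  by (rule poly_mapping_eqI) (simp add: exp_dvd_def lookup_add lookup_minus)

lemma keys_add_exp: "keys (m + n) = keys m \<union> keys (n :: 'v \<Rightarrow>\<^sub>0 nat)"
  by (auto simp: in_keys_iff lookup_add)

lemma lookup_single_times:
  fixes p :: "'a::cancel_comm_monoid_add \<Rightarrow>\<^sub>0 'b::comm_semiring_0"
  shows "lookup (single m c * p) (m + n) = c * lookup p n"
proof -
  have "lookup (single m c * p) (m + n) =
      (\<Sum>l\<in>keys (single m c). \<Sum>q\<in>keys p. (lookup (single m c) l * lookup p q when l + q = m + n))"
    by (rule lookup_times_keys)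
  also have "\<dots> = (\<Sum>q\<in>keys p. (c * lookup p q when q = n))"
    by (cases "c = 0") (auto simp: when_def)
  also have "\<dots> = c * lookup p n"
    by (cases "n \<in> keys p") (auto simp: when_def in_keys_iff)
  finally show ?thesis .
qed

lemma keys_single_times:
  fixes p :: "'a::cancel_comm_monoid_add \<Rightarrow>\<^sub>0 'b::{comm_semiring_0, semiring_no_zero_divisors}"
  assumes "c \<noteq> 0"
  shows "keys (single m c * p) = (+) m ` keys p"
proof
  show "keys (single m c * p) \<subseteq> (+) m ` keys p"
    using keys_mult[of "single m c" p] by (auto split: if_splits)
  show "(+) m ` keys p \<subseteq> keys (single m c * p)"
    using assms by (auto simp: in_keys_iff lookup_single_times)
qed

lemma single_factor_of_exp_dvd:
  fixes p :: "('v \<Rightarrow>\<^sub>0 nat) \<Rightarrow>\<^sub>0 'b::comm_semiring_1"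
  assumes "\<forall>n\<in>keys p. exp_dvd m n"
  shows "\<exists>h. p = single m 1 * h"
proof -
  have "single m 1 * (\<Sum>n\<in>keys p. single (n - m) (lookup p n)) =
      (\<Sum>n\<in>keys p. single (m + (n - m)) (lookup p n))"
    by (simp add: sum_distrib_left mult_single)
  also have "\<dots> = (\<Sum>n\<in>keys p. single n (lookup p n))"
    using assms by (intro sum.cong refl) (simp add: exp_dvd_add_diff)
  also have "\<dots> = p" by (rule poly_mapping_sum_single[symmetric])
  finally show ?thesis by metis
qed

definition restrict_keys :: "('a \<Rightarrow> bool) \<Rightarrow> ('a \<Rightarrow>\<^sub>0 'b::zero) \<Rightarrow> 'a \<Rightarrow>\<^sub>0 'b" where
  "restrict_keys P p = Poly_Mapping.mapp (\<lambda>k c. if P k then c else 0) p"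

lemma lookup_restrict_keys: "lookup (restrict_keys P p) k = (if P k then lookup p k else 0)"
  by (auto simp: restrict_keys_def lookup_mapp when_def in_keys_iff)

lemma keys_restrict_keys: "keys (restrict_keys P p) = {k \<in> keys p. P k}"
  by (auto simp: in_keys_iff lookup_restrict_keys split: if_splits)

lemma restrict_keys_split:
  fixes p :: "'a \<Rightarrow>\<^sub>0 'b::monoid_add"
  shows "p = restrict_keys P p + restrict_keys (\<lambda>k. \<not> P k) p"
  by (rule poly_mapping_eqI) (simp add: lookup_add lookup_restrict_keys)

definition set_exp :: "'v::finite set \<Rightarrow> 'v \<Rightarrow>\<^sub>0 nat" where
  "set_exp A = Abs_poly_mapping (\<lambda>v. if v \<in> A then 1 else 0)"

lemma lookup_set_exp: "lookup (set_exp A) v = (if v \<in> A then 1 else 0)"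
  by (simp add: set_exp_def)

lemma keys_set_exp: "keys (set_exp A) = A"
  by (auto simp: in_keys_iff lookup_set_exp split: if_splits)

lemma exp_dvd_set_exp_iff: "exp_dvd (set_exp A) n \<longleftrightarrow> A \<subseteq> keys n"
  by (auto simp: exp_dvd_def lookup_set_exp in_keys_iff Suc_le_eq)

lemma prod_Var_eq_single:
  "(\<Prod>v\<in>A. Var v) = (single (set_exp A) 1 :: ('v::finite, 'k::field) mpoly)"
proof (induction A rule: infinite_finite_induct)
  case (infinite A)
  then show ?case by simp
next
  case empty
  have "set_exp ({} :: 'v set) = 0" by (rule poly_mapping_eqI) (simp add: lookup_set_exp)
  then show ?case by simp
next
  case (insert v A)
  have "set_exp (insert v A) = single v 1 + set_exp A"
    using insert.hyps(2) by (intro poly_mapping_eqI) (auto simp: lookup_set_exp lookup_add lookup_single when_def)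
  with insert show ?case by (simp add: Var_def mult_single)
qed

lemma prod_Var_neq_0: "(\<Prod>v\<in>A. Var v) \<noteq> (0 :: ('v::finite, 'k::field) mpoly)"
  by (simp add: prod_Var_eq_single single_eq_0_iff)

lemma prod_Var_in_homog: "(\<Prod>v\<in>A. Var v) \<in> (homog (card A) :: ('v::finite, 'k::field) mpoly set)"
  by (simp add: prod_Var_eq_single homog_def mdeg_def keys_set_exp lookup_set_exp)

lemma Var_power: "(Var v :: ('v, 'k::field) mpoly) ^ k = single (single v k) 1"
  by (induction k) (auto simp: Var_def mult_single single_add[symmetric] add.commute)

lemma Var_neq_0: "(Var v :: ('v, 'k::field) mpoly) \<noteq> 0"
  by (simp add: Var_def single_eq_0_iff)

lemma ideal_0: "is_ideal I \<Longrightarrow> 0 \<in> I"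
  by (simp add: is_ideal_def)

lemma ideal_add: "is_ideal I \<Longrightarrow> a \<in> I \<Longrightarrow> b \<in> I \<Longrightarrow> a + b \<in> I"
  by (simp add: is_ideal_def)

lemma ideal_mult_left: "is_ideal I \<Longrightarrow> a \<in> I \<Longrightarrow> r * a \<in> I"
  by (simp add: is_ideal_def)

lemma ideal_mult_right: "is_ideal I \<Longrightarrow> a \<in> I \<Longrightarrow> a * r \<in> I"
  using ideal_mult_left[of I a r] by (simp add: mult.commute)

lemma ideal_uminus: "is_ideal I \<Longrightarrow> a \<in> I \<Longrightarrow> - a \<in> I"
  using ideal_mult_left[of I a "-1"] by simp

lemma ideal_diff: "is_ideal I \<Longrightarrow> a \<in> I \<Longrightarrow> b \<in> I \<Longrightarrow> a - b \<in> I"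
  using ideal_add[of I a "- b"] ideal_uminus[of I b] by simp

lemma ideal_sum: "is_ideal I \<Longrightarrow> (\<And>x. x \<in> X \<Longrightarrow> f x \<in> I) \<Longrightarrow> sum f X \<in> I"
proof (induction X rule: infinite_finite_induct)
  case (insert x F)
  then show ?case using ideal_add by force
qed (auto simp: ideal_0)

lemma is_ideal_ideal_gen: "is_ideal (ideal_gen G)"
  unfolding ideal_gen_def is_ideal_def by blast

lemma ideal_gen_subset: "G \<subseteq> ideal_gen G"
  unfolding ideal_gen_def by blast

lemma ideal_gen_least: "is_ideal J \<Longrightarrow> G \<subseteq> J \<Longrightarrow> ideal_gen G \<subseteq> J"
  unfolding ideal_gen_def by blast

lemma prime_ideal_is_ideal: "is_prime_ideal P \<Longrightarrow> is_ideal P"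
  by (simp add: is_prime_ideal_def)

lemma prime_ideal_mult: "is_prime_ideal P \<Longrightarrow> a * b \<in> P \<Longrightarrow> a \<in> P \<or> b \<in> P"
  by (simp add: is_prime_ideal_def)

lemma one_notin_prime_ideal: "is_prime_ideal P \<Longrightarrow> 1 \<notin> P"
proof
  assume P: "is_prime_ideal P" and "1 \<in> P"
  then have "x \<in> P" for x using ideal_mult_left[of P 1 x] by (simp add: is_prime_ideal_def)
  with P show False by (auto simp: is_prime_ideal_def)
qed

lemma prime_ideal_power: "is_prime_ideal P \<Longrightarrow> x ^ k \<in> P \<Longrightarrow> x \<in> P"
proof (induction k)
  case (Suc k)
  then show ?case using prime_ideal_mult[of P x "x ^ k"] by auto
qed (simp add: one_notin_prime_ideal)

lemma prod_notin_prime_ideal: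
  "finite X \<Longrightarrow> is_prime_ideal P \<Longrightarrow> (\<And>x. x \<in> X \<Longrightarrow> f x \<notin> P) \<Longrightarrow> prod f X \<notin> P"
proof (induction X rule: finite_induct)
  case (insert x X)
  then show ?case using prime_ideal_mult[of P "f x" "prod f X"] by auto
qed (simp add: one_notin_prime_ideal)

lemma prime_ideal_avoidance:
  assumes P: "is_prime_ideal P" and fin: "finite X" and ideals: "\<And>x. x \<in> X \<Longrightarrow> is_ideal (F x)"
    and sub: "(\<Inter>x\<in>X. F x) \<subseteq> P"
  shows "\<exists>x\<in>X. F x \<subseteq> P"
proof (rule ccontr)
  assume "\<not> ?thesis"
  then have "\<forall>x\<in>X. \<exists>a. a \<in> F x \<and> a \<notin> P" by blast
  then have "\<exists>a. \<forall>x\<in>X. a x \<in> F x \<and> a x \<notin> P" by (rule bchoice)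
  then obtain a where a: "\<And>x. x \<in> X \<Longrightarrow> a x \<in> F x \<and> a x \<notin> P" by blast
  have "prod a X \<in> F x" if "x \<in> X" for x
  proof -
    have "prod a X = a x * prod a (X - {x})" using fin that by (simp add: prod.remove)
    then show ?thesis using ideal_mult_right[OF ideals[OF that]] a[OF that] by simp
  qed
  with sub have "prod a X \<in> P" by blast
  with prod_notin_prime_ideal[OF fin P, of a] a show False by blast
qed

lemma prime_ideal_eq_Inter:
  assumes P: "is_prime_ideal P" and fin: "finite X" and ideals: "\<And>x. x \<in> X \<Longrightarrow> is_ideal (F x)"
    and eq: "P = (\<Inter>x\<in>X. F x)"
  shows "\<exists>x\<in>X. P = F x"
proof -
  have "(\<Inter>x\<in>X. F x) \<subseteq> P" using eq by simp
  then obtain x where "x \<in> X" "F x \<subseteq> P"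
    using prime_ideal_avoidance[of P X F] P fin ideals by blast
  moreover from \<open>x \<in> X\<close> have "P \<subseteq> F x" unfolding eq by blast
  ultimately show ?thesis by blast
qed

lemma colon_elem_Inter: "colon_elem (\<Inter>x\<in>X. F x) f = (\<Inter>x\<in>X. colon_elem (F x) f)"
  by (auto simp: colon_elem_def)

lemma colon_Inter: "colon (\<Inter>x\<in>X. F x) J = (\<Inter>x\<in>X. colon (F x) J)"
  by (auto simp: colon_def)

lemma colon_elem_prime_ideal:
  "is_prime_ideal P \<Longrightarrow> colon_elem P f = (if f \<in> P then UNIV else P)"
  by (auto simp: colon_elem_def is_prime_ideal_def intro: ideal_mult_left ideal_mult_right)

lemma colon_prime_ideal:
  "is_prime_ideal P \<Longrightarrow> is_ideal J \<Longrightarrow> colon P J = (if J \<subseteq> P then UNIV else P)"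
  by (auto simp: colon_def is_prime_ideal_def intro: ideal_mult_left ideal_mult_right)

definition monomial_ideal :: "('v \<Rightarrow>\<^sub>0 nat) set \<Rightarrow> ('v, 'k::field) mpoly set" where
  "monomial_ideal U = {p. keys p \<subseteq> U}"

definition exp_upward_closed :: "('v \<Rightarrow>\<^sub>0 nat) set \<Rightarrow> bool" where
  "exp_upward_closed U \<longleftrightarrow> (\<forall>m n. m \<in> U \<longrightarrow> exp_dvd m n \<longrightarrow> n \<in> U)"

lemma is_ideal_monomial_ideal:
  assumes "exp_upward_closed U"
  shows "is_ideal (monomial_ideal U)"
  unfolding is_ideal_def
proof (intro conjI ballI allI)
  show "0 \<in> monomial_ideal U" by (simp add: monomial_ideal_def)
next
  fix a b :: "('a, 'b) mpoly"
  assume "a \<in> monomial_ideal U" "b \<in> monomial_ideal U"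
  then show "a + b \<in> monomial_ideal U"
    unfolding monomial_ideal_def using keys_add[of a b] by auto
next
  fix a r :: "('a, 'b) mpoly"
  assume a: "a \<in> monomial_ideal U"
  have "keys (r * a) \<subseteq> {x + y |x y. x \<in> keys r \<and> y \<in> keys a}" by (rule keys_mult)
  also have "\<dots> \<subseteq> U"
    using a assms unfolding monomial_ideal_def exp_upward_closed_def by (auto intro: exp_dvd_add)
  finally show "r * a \<in> monomial_ideal U" by (simp add: monomial_ideal_def)
qed

definition var_ideal :: "'v set \<Rightarrow> ('v, 'k::field) mpoly set" where
  "var_ideal T = monomial_ideal {n. keys n \<inter> T \<noteq> {}}"

lemma is_ideal_var_ideal: "is_ideal (var_ideal T)"
  unfolding var_ideal_def exp_upward_closed_def
  by (rule is_ideal_monomial_ideal) (use exp_dvd_keys in \<open>auto simp: exp_upward_closed_def\<close>)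

lemma single_in_var_ideal_iff:
  "(single m c :: ('v, 'k::field) mpoly) \<in> var_ideal T \<longleftrightarrow> c = 0 \<or> keys m \<inter> T \<noteq> {}"
  by (simp add: var_ideal_def monomial_ideal_def)

lemma Var_in_var_ideal_iff: "(Var v :: ('v, 'k::field) mpoly) \<in> var_ideal T \<longleftrightarrow> v \<in> T"
  by (simp add: Var_def single_in_var_ideal_iff)

lemma prod_Var_in_var_ideal_iff:
  "(\<Prod>v\<in>A. Var v :: ('v::finite, 'k::field) mpoly) \<in> var_ideal T \<longleftrightarrow> A \<inter> T \<noteq> {}"
  by (simp add: prod_Var_eq_single single_in_var_ideal_iff keys_set_exp)

lemma var_ideal_subset_iff:
  "(var_ideal T :: ('v, 'k::field) mpoly set) \<subseteq> var_ideal T' \<longleftrightarrow> T \<subseteq> T'"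
proof
  assume sub: "var_ideal T \<subseteq> (var_ideal T' :: ('v, 'k) mpoly set)"
  show "T \<subseteq> T'"
  proof
    fix v assume "v \<in> T"
    then have "(Var v :: ('v, 'k) mpoly) \<in> var_ideal T" by (simp only: Var_in_var_ideal_iff)
    with sub have "(Var v :: ('v, 'k) mpoly) \<in> var_ideal T'" by (rule subsetD)
    then show "v \<in> T'" by (simp only: Var_in_var_ideal_iff)
  qed
next
  assume "T \<subseteq> T'"
  then show "var_ideal T \<subseteq> (var_ideal T' :: ('v, 'k) mpoly set)"
    unfolding var_ideal_def monomial_ideal_def by blast
qed

lemma var_ideal_least:
  fixes Q :: "('v, 'k::field) mpoly set"
  assumes Q: "is_ideal Q" and vars: "Var ` T \<subseteq> Q"
  shows "var_ideal T \<subseteq> Q"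
proof
  fix p :: "('v, 'k) mpoly"
  assume p: "p \<in> var_ideal T"
  have "single n (lookup p n) \<in> Q" if n: "n \<in> keys p" for n
  proof -
    obtain v where v: "v \<in> keys n" "v \<in> T"
      using p n by (auto simp: var_ideal_def monomial_ideal_def)
    then have "exp_dvd (single v 1) n"
      by (auto simp: exp_dvd_def lookup_single when_def in_keys_iff)
    then have "single n (lookup p n) = Var v * single (n - single v 1) (lookup p n)"
      by (simp add: Var_def mult_single exp_dvd_add_diff)
    with vars v(2) show ?thesis by (auto intro: ideal_mult_right[OF Q])
  qed
  then have "(\<Sum>n\<in>keys p. single n (lookup p n)) \<in> Q" by (intro ideal_sum[OF Q])
  then show "p \<in> Q" using poly_mapping_sum_single[of p] by simp
qed

text \<open>Split each factor into its monomials inside and outside the ideal; the outside parts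
  multiply to a polynomial all of whose monomials avoid the variables in \<open>T\<close>, so one of them is 0.\<close>

lemma prime_var_ideal:
  assumes "T \<noteq> {}"
  shows "is_prime_ideal (var_ideal T :: ('v::countable, 'k::field) mpoly set)"
  unfolding is_prime_ideal_def
proof (intro conjI allI impI is_ideal_var_ideal)
  show "var_ideal T \<noteq> UNIV"
    using single_in_var_ideal_iff[of 0 1 T] by (auto simp: one_poly_mapping_def)
  fix a b :: "('v, 'k) mpoly"
  assume ab: "a * b \<in> var_ideal T"
  let ?H = "{n. keys n \<inter> T \<noteq> {}}"
  define a0 where "a0 = restrict_keys (\<lambda>n. n \<notin> ?H) a"
  define a1 where "a1 = restrict_keys (\<lambda>n. \<not> n \<notin> ?H) a"
  define b0 where "b0 = restrict_keys (\<lambda>n. n \<notin> ?H) b"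
  define b1 where "b1 = restrict_keys (\<lambda>n. \<not> n \<notin> ?H) b"
  have a_eq: "a = a0 + a1" and b_eq: "b = b0 + b1"
    unfolding a0_def a1_def b0_def b1_def by (rule restrict_keys_split)+
  have a1: "a1 \<in> var_ideal T" and b1: "b1 \<in> var_ideal T"
    by (auto simp: a1_def b1_def var_ideal_def monomial_ideal_def keys_restrict_keys)
  have "a0 * b0 = a * b - a1 * b - a0 * b1"
    unfolding a_eq b_eq by (simp add: algebra_simps)
  also have "\<dots> \<in> var_ideal T"
  proof -
    have "a1 * b \<in> var_ideal T" by (rule ideal_mult_right[OF is_ideal_var_ideal a1])
    moreover have "a0 * b1 \<in> var_ideal T" by (rule ideal_mult_left[OF is_ideal_var_ideal b1])
    ultimately show ?thesis using ab by (intro ideal_diff[OF is_ideal_var_ideal])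
  qed
  finally have in_H: "keys (a0 * b0) \<subseteq> ?H" by (simp add: var_ideal_def monomial_ideal_def)
  have "keys (a0 * b0) \<subseteq> {x + y |x y. x \<in> keys a0 \<and> y \<in> keys b0}" by (rule keys_mult)
  also have "\<dots> \<subseteq> - ?H" by (auto simp: a0_def b0_def keys_restrict_keys keys_add_exp)
  finally have "keys (a0 * b0) = {}" using in_H by blast
  then have "keys a0 = {} \<or> keys b0 = {}" by (simp add: mpoly_mult_eq_0_iff)
  then show "a \<in> var_ideal T \<or> b \<in> var_ideal T"
    unfolding a0_def b0_def keys_restrict_keys var_ideal_def monomial_ideal_def by blast
qed

section \<open>The cover ideal and its associated primes\<close>

lemma simple_graph_edgeE:
  assumes "simple_graph E" "e \<in> E"
  obtains a b where "a \<noteq> b" "e = {a, b}"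
  using assms unfolding simple_graph_def card_2_iff by blast

lemma simple_graph_edge_neq_empty: "simple_graph E \<Longrightarrow> e \<in> E \<Longrightarrow> e \<noteq> {}"
  by (metis simple_graph_edgeE insert_not_empty)

lemma simple_graph_edge_subset_eq:
  "simple_graph E \<Longrightarrow> e \<in> E \<Longrightarrow> e' \<in> E \<Longrightarrow> e' \<subseteq> e \<Longrightarrow> e' = e"
  unfolding simple_graph_def by (metis card_subset_eq finite.emptyI finite.insertI card_2_iff)

lemma exists_min_vertex_cover_subset:
  "finite A \<Longrightarrow> vertex_cover E A \<Longrightarrow> \<exists>C\<subseteq>A. min_vertex_cover E C"
proof (induction A rule: finite_psubset_induct)
  case (psubset A)
  show ?case
  proof (cases "min_vertex_cover E A")
    case False
    then obtain A' where "A' \<subset> A" "vertex_cover E A'"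
      using psubset.prems unfolding min_vertex_cover_def by blast
    with psubset.IH show ?thesis by (meson order.trans psubset_imp_subset)
  qed blast
qed

lemma vertex_cover_keys_upward_closed:
  fixes E :: "'v set set"
  shows "exp_upward_closed {n. vertex_cover E (keys n)}"
  unfolding exp_upward_closed_def
proof (intro allI impI)
  fix m n :: "'v \<Rightarrow>\<^sub>0 nat"
  assume "m \<in> {n. vertex_cover E (keys n)}" "exp_dvd m n"
  then show "n \<in> {n. vertex_cover E (keys n)}"
    using exp_dvd_keys[of m n] by (auto simp: vertex_cover_def)
qed

lemma is_ideal_cover_ideal: "is_ideal (cover_ideal E)"
  unfolding cover_ideal_def by (rule is_ideal_ideal_gen)

lemma cover_ideal_eq_monomial_ideal:
  "cover_ideal E = (monomial_ideal {n. vertex_cover E (keys n)} :: ('v::finite, 'k::field) mpoly set)"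
proof
  let ?M = "monomial_ideal {n. vertex_cover E (keys n)} :: ('v, 'k) mpoly set"
  have ideal: "is_ideal ?M"
    by (rule is_ideal_monomial_ideal[OF vertex_cover_keys_upward_closed])
  show "cover_ideal E \<subseteq> ?M"
    unfolding cover_ideal_def using ideal
    by (intro ideal_gen_least) (auto simp: prod_Var_eq_single monomial_ideal_def keys_set_exp
        min_vertex_cover_def)
  show "?M \<subseteq> cover_ideal E"
  proof
    fix p :: "('v, 'k) mpoly"
    assume p: "p \<in> ?M"
    have "single n (lookup p n) \<in> cover_ideal E" if n: "n \<in> keys p" for n
    proof -
      obtain C where C: "C \<subseteq> keys n" "min_vertex_cover E C"
        using p n exists_min_vertex_cover_subset[of "keys n" E] by (auto simp: monomial_ideal_def)
      then have "(\<Prod>v\<in>C. Var v) \<in> cover_ideal E"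
        unfolding cover_ideal_def by (blast intro: ideal_gen_subset[THEN subsetD])
      moreover have "single n (lookup p n) = single (n - set_exp C) (lookup p n) * (\<Prod>v\<in>C. Var v)"
        using exp_dvd_add_diff[of "set_exp C" n] C(1)
        by (simp add: prod_Var_eq_single mult_single exp_dvd_set_exp_iff add.commute)
      ultimately show ?thesis using ideal_mult_left[OF is_ideal_cover_ideal] by metis
    qed
    then have "(\<Sum>n\<in>keys p. single n (lookup p n)) \<in> cover_ideal E"
      unfolding cover_ideal_def by (intro ideal_sum[OF is_ideal_ideal_gen])
    then show "p \<in> cover_ideal E" using poly_mapping_sum_single[of p] by simp
  qed
qed

lemma cover_ideal_eq_Inter:
  "cover_ideal E = (\<Inter>e\<in>E. var_ideal e :: ('v::finite, 'k::field) mpoly set)"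
  by (auto simp: cover_ideal_eq_monomial_ideal var_ideal_def monomial_ideal_def vertex_cover_def)

lemma prod_Var_in_cover_ideal_iff:
  "(\<Prod>v\<in>A. Var v :: ('v::finite, 'k::field) mpoly) \<in> cover_ideal E \<longleftrightarrow> vertex_cover E A"
  by (simp add: cover_ideal_eq_monomial_ideal monomial_ideal_def prod_Var_eq_single keys_set_exp)

lemma colon_elem_cover_ideal:
  assumes "simple_graph E"
  shows "colon_elem (cover_ideal E :: ('v::finite, 'k::field) mpoly set) f =
    (\<Inter>e\<in>{e\<in>E. f \<notin> var_ideal e}. var_ideal e)"
proof -
  have "colon_elem (cover_ideal E :: ('v, 'k) mpoly set) f = (\<Inter>e\<in>E. colon_elem (var_ideal e) f)"
    by (simp add: cover_ideal_eq_Inter colon_elem_Inter)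
  also have "\<dots> = (\<Inter>e\<in>E. if f \<in> var_ideal e then UNIV else var_ideal e)"
    using assms by (intro INF_cong refl colon_elem_prime_ideal prime_var_ideal)
      (rule simple_graph_edge_neq_empty)
  finally show ?thesis by auto
qed

lemma colon_elem_cover_ideal_prod_Var:
  assumes "simple_graph E"
  shows "colon_elem (cover_ideal E :: ('v::finite, 'k::field) mpoly set) (\<Prod>v\<in>-B. Var v) =
    (\<Inter>e\<in>{e\<in>E. e \<subseteq> B}. var_ideal e)"
  using colon_elem_cover_ideal[OF assms, of "\<Prod>v\<in>-B. Var v"]
  by (simp add: prod_Var_in_var_ideal_iff Int_commute disjoint_eq_subset_Compl)

lemma colon_elem_cover_ideal_edge:
  assumes "simple_graph E" "e \<in> E"
  shows "colon_elem (cover_ideal E :: ('v::finite, 'k::field) mpoly set) (\<Prod>v\<in>-e. Var v) = var_ideal e"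
proof -
  have "{e' \<in> E. e' \<subseteq> e} = {e}"
    using assms simple_graph_edge_subset_eq[OF assms] by blast
  then show ?thesis by (simp add: colon_elem_cover_ideal_prod_Var[OF assms(1)])
qed

lemma Ass_cover_ideal:
  assumes "simple_graph E"
  shows "Ass (cover_ideal E :: ('v::finite, 'k::field) mpoly set) = var_ideal ` E"
proof
  show "Ass (cover_ideal E :: ('v, 'k) mpoly set) \<subseteq> var_ideal ` E"
  proof
    fix P assume "P \<in> Ass (cover_ideal E :: ('v, 'k) mpoly set)"
    then obtain f where "is_prime_ideal P" "colon_elem (cover_ideal E) f = P"
      by (auto simp: Ass_def)
    then have P: "is_prime_ideal P" "P = (\<Inter>e\<in>{e\<in>E. f \<notin> var_ideal e}. var_ideal e)"
      using colon_elem_cover_ideal[OF assms, of f] by auto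
    then have "\<exists>e\<in>{e\<in>E. f \<notin> var_ideal e}. P = var_ideal e"
      by (intro prime_ideal_eq_Inter is_ideal_var_ideal) auto
    then show "P \<in> var_ideal ` E" by blast
  qed
  show "var_ideal ` E \<subseteq> Ass (cover_ideal E :: ('v, 'k) mpoly set)"
    using colon_elem_cover_ideal_edge[OF assms] prime_var_ideal[where 'v='v and 'k='k]
      simple_graph_edge_neq_empty[OF assms]
    by (auto simp: Ass_def)
qed

lemma colon_cover_ideal_var_ideal:
  assumes G: "simple_graph E" and e: "e \<in> E"
  shows "colon (cover_ideal E) (var_ideal e :: ('v::finite, 'k::field) mpoly set) =
    (\<Inter>e'\<in>E - {e}. var_ideal e')"
proof -
  have "colon (cover_ideal E) (var_ideal e :: ('v, 'k) mpoly set) =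
      (\<Inter>e'\<in>E. if (var_ideal e :: ('v, 'k) mpoly set) \<subseteq> var_ideal e' then UNIV else var_ideal e')"
    unfolding cover_ideal_eq_Inter colon_Inter
    using G by (intro INF_cong refl)
      (simp add: colon_prime_ideal[OF prime_var_ideal is_ideal_var_ideal] simple_graph_edge_neq_empty)
  also have "\<dots> = (\<Inter>e'\<in>E. if e' = e then UNIV else var_ideal e')"
    using simple_graph_edge_subset_eq[OF G _ e] by (intro INF_cong refl) (auto simp: var_ideal_subset_iff)
  also have "\<dots> = (\<Inter>e'\<in>E - {e}. var_ideal e')"
    by auto
  finally show ?thesis .
qed

lemma v_number_cover_ideal_empty: "v_number (cover_ideal {} :: ('v::finite, 'k::field) mpoly set) = \<infinity>"
proof -
  have "Ass (cover_ideal {} :: ('v, 'k) mpoly set) = {}"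
    by (auto simp: Ass_def colon_elem_def cover_ideal_eq_Inter is_prime_ideal_def)
  then show ?thesis by (simp add: v_number_def top_enat_def)
qed

section \<open>The v-number hypothesis: every edge is dominating\<close>

text \<open>For a simple graph this says that every edge is a dominating set: each vertex outside
  an edge is adjacent to one of its ends.\<close>

definition every_edge_dominating :: "'v set set \<Rightarrow> bool" where
  "every_edge_dominating E \<longleftrightarrow> (\<forall>e\<in>E. \<forall>k. k \<notin> e \<longrightarrow> (\<exists>e'\<in>E. e' \<noteq> e \<and> e' \<subseteq> insert k e))"

lemma v_number_le:
  "f \<in> homog d \<Longrightarrow> P \<in> Ass I \<Longrightarrow> colon_elem I f = P \<Longrightarrow> v_number I \<le> enat d"
  unfolding v_number_def by (intro INF_lower) blast

lemma v_number_at_le: "f \<in> homog d \<Longrightarrow> colon_elem I f = P \<Longrightarrow> v_number_at I P \<le> enat d"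
  unfolding v_number_at_def by (intro INF_lower) blast

lemma v_number_le_v_number_at: "P \<in> Ass I \<Longrightarrow> v_number I \<le> v_number_at I P"
  unfolding v_number_def v_number_at_def by (intro INF_superset_mono) auto

lemma card_Compl_finite: "card (- A :: 'v::finite set) = card (UNIV :: 'v set) - card A"
  by (simp add: Compl_eq_Diff_UNIV card_Diff_subset)

lemma v_number_at_cover_ideal_le:
  assumes G: "simple_graph E" and P: "P \<in> Ass (cover_ideal E :: ('v::finite, 'k::field) mpoly set)"
  shows "v_number_at (cover_ideal E) P \<le> enat (card (UNIV :: 'v set) - 2)"
proof -
  obtain e where e: "e \<in> E" "P = var_ideal e"
    using P Ass_cover_ideal[OF G] by auto
  have "card e = 2" using G e(1) by (simp add: simple_graph_def)
  then have "(\<Prod>v\<in>-e. Var v :: ('v, 'k) mpoly) \<in> homog (card (UNIV :: 'v set) - 2)"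
    using prod_Var_in_homog[of "-e"] by (simp add: card_Compl_finite)
  from v_number_at_le[OF this colon_elem_cover_ideal_edge[OF G e(1)]] e(2) show ?thesis
    by simp
qed

text \<open>If no second edge lies inside \<open>e \<union> {k}\<close>, then the squarefree monomial on the
  remaining \<open>s - 3\<close> vertices already has colon ideal \<open>var_ideal e\<close>.\<close>

lemma every_edge_dominating_if_v_number:
  assumes G: "simple_graph E"
    and v: "v_number (cover_ideal E :: ('v::finite, 'k::field) mpoly set) = enat (card (UNIV :: 'v set) - 2)"
  shows "every_edge_dominating E"
  unfolding every_edge_dominating_def
proof (intro ballI allI impI)
  fix e k assume e: "e \<in> E" and k: "k \<notin> e"
  show "\<exists>e'\<in>E. e' \<noteq> e \<and> e' \<subseteq> insert k e"
  proof (rule ccontr)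
    assume "\<not> ?thesis"
    then have "{e' \<in> E. e' \<subseteq> insert k e} = {e}" using e by auto
    then have colon: "colon_elem (cover_ideal E :: ('v, 'k) mpoly set) (\<Prod>v\<in>-insert k e. Var v) = var_ideal e"
      by (simp add: colon_elem_cover_ideal_prod_Var[OF G])
    have "card (insert k e) = 3" using G e k by (simp add: simple_graph_def card_insert_if)
    moreover have "(\<Prod>v\<in>-insert k e. Var v :: ('v, 'k) mpoly) \<in> homog (card (UNIV :: 'v set) - card (insert k e))"
      using prod_Var_in_homog[of "-insert k e"] by (simp add: card_Compl_finite)
    moreover have "var_ideal e \<in> Ass (cover_ideal E :: ('v, 'k) mpoly set)"
      using Ass_cover_ideal[OF G, where 'k='k] e by simp
    ultimately have "v_number (cover_ideal E :: ('v, 'k) mpoly set) \<le> enat (card (UNIV :: 'v set) - 3)"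
      using v_number_le[OF _ _ colon] by simp
    moreover have "card (UNIV :: 'v set) \<ge> 3"
      using card_mono[of UNIV "insert k e"] \<open>card (insert k e) = 3\<close> by simp
    ultimately show False using v by simp
  qed
qed

lemma Compl_edge_subset_if_meets_other_edges:
  assumes "every_edge_dominating E" "e \<in> E"
    and meets: "\<And>e'. e' \<in> E \<Longrightarrow> e' \<noteq> e \<Longrightarrow> e' \<inter> A \<noteq> {}" and "A \<inter> e = {}"
  shows "- e \<subseteq> A"
proof
  fix v assume "v \<in> - e"
  then obtain e' where e': "e' \<in> E" "e' \<noteq> e" "e' \<subseteq> insert v e"
    using assms(1,2) unfolding every_edge_dominating_def by blast
  then obtain x where "x \<in> e'" "x \<in> A" using meets by blast
  moreover from this have "x \<notin> e" using assms(4) by blast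
  ultimately show "v \<in> A" using e'(3) by auto
qed

lemma min_vertex_cover_Compl_subset:
  assumes G: "simple_graph E" and dom: "every_edge_dominating E"
    and C: "min_vertex_cover E C" and C': "min_vertex_cover E C'" and "C \<noteq> C'"
  shows "- C \<subseteq> C'"
proof (rule subsetI, rule ccontr)
  fix v assume "v \<in> - C" "v \<notin> C'"
  then have v: "v \<notin> C" "v \<notin> C'" by simp_all
  have meets: "e \<inter> C \<noteq> {}" "e \<inter> C' \<noteq> {}" if "e \<in> E" for e
    using C C' that by (auto simp: min_vertex_cover_def vertex_cover_def)
  have "\<not> C' \<subseteq> C"
    using C C' \<open>C \<noteq> C'\<close> unfolding min_vertex_cover_def by blast
  then obtain w where w: "w \<in> C'" "w \<notin> C" by blast
  have "\<not> vertex_cover E (C' - {w})" using C' w(1) by (auto simp: min_vertex_cover_def)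
  then obtain e where e: "e \<in> E" "e \<inter> (C' - {w}) = {}" by (auto simp: vertex_cover_def)
  then have "w \<in> e" using meets(2)[OF e(1)] by blast
  then obtain y where y: "e = {w, y}"
    using simple_graph_edgeE[OF G e(1)] by (metis insert_commute insert_iff singletonD)
  have yC: "y \<in> C" using meets(1)[OF e(1)] y w(2) by auto
  have yC': "y \<notin> C'" using e(2) y yC w(2) by auto
  have "v \<notin> e" using y v w(1) yC by auto
  then obtain e' where e': "e' \<in> E" "e' \<noteq> e" "e' \<subseteq> insert v e"
    using dom e(1) unfolding every_edge_dominating_def by blast
  have "y \<in> e'" using meets(1)[OF e'(1)] e'(3) y v(1) w(2) by auto
  moreover have "w \<in> e'" using meets(2)[OF e'(1)] e'(3) y v(2) yC' by auto
  ultimately have "e \<subseteq> e'" using y by simp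
  then show False using simple_graph_edge_subset_eq[OF G e'(1) e(1)] e'(2) by simp
qed

lemma Inter_var_ideal_other_edges_subset:
  assumes dom: "every_edge_dominating E" and e: "e \<in> E"
  shows "(\<Inter>e'\<in>E - {e}. var_ideal e') \<subseteq>
    {a + h * (\<Prod>v\<in>-e. Var v) | a h. a \<in> (cover_ideal E :: ('v::finite, 'k::field) mpoly set)}"
proof
  fix p :: "('v, 'k) mpoly"
  assume p: "p \<in> (\<Inter>e'\<in>E - {e}. var_ideal e')"
  define p1 where "p1 = restrict_keys (\<lambda>n. keys n \<inter> e = {}) p"
  define p2 where "p2 = restrict_keys (\<lambda>n. \<not> keys n \<inter> e = {}) p"
  have p_eq: "p = p1 + p2" unfolding p1_def p2_def by (rule restrict_keys_split)
  have meets: "keys n \<inter> e' \<noteq> {}" if "n \<in> keys p" "e' \<in> E" "e' \<noteq> e" for n e'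
    using p that by (auto simp: var_ideal_def monomial_ideal_def)
  have "p2 \<in> cover_ideal E"
    using meets by (auto simp: p2_def keys_restrict_keys cover_ideal_eq_monomial_ideal
        monomial_ideal_def vertex_cover_def)
  moreover have "\<forall>n\<in>keys p1. exp_dvd (set_exp (- e)) n"
    unfolding exp_dvd_set_exp_iff
  proof
    fix n assume "n \<in> keys p1"
    then have "n \<in> keys p" "keys n \<inter> e = {}" by (auto simp: p1_def keys_restrict_keys)
    then show "- e \<subseteq> keys n"
      using Compl_edge_subset_if_meets_other_edges[OF dom e, of "keys n"] meets by blast
  qed
  then obtain h where "p1 = single (set_exp (- e)) 1 * h"
    using single_factor_of_exp_dvd by blast
  then have "p = p2 + h * (\<Prod>v\<in>-e. Var v)"
    unfolding p_eq by (simp add: prod_Var_eq_single mult.commute add.commute)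
  ultimately show "p \<in> {a + h * (\<Prod>v\<in>-e. Var v) | a h. a \<in> cover_ideal E}" by blast
qed

lemma Inter_var_ideal_other_edges:
  assumes G: "simple_graph E" and dom: "every_edge_dominating E" and e: "e \<in> E"
  shows "(\<Inter>e'\<in>E - {e}. var_ideal e') =
    {a + h * (\<Prod>v\<in>-e. Var v) | a h. a \<in> (cover_ideal E :: ('v::finite, 'k::field) mpoly set)}"
    (is "?J = {a + h * ?u | a h. a \<in> ?I}")
proof
  show "{a + h * ?u | a h. a \<in> ?I} \<subseteq> ?J"
  proof
    fix x assume "x \<in> {a + h * ?u | a h. a \<in> ?I}"
    then obtain a h where x: "x = a + h * ?u" "a \<in> ?I" by blast
    have "x \<in> var_ideal e'" if e': "e' \<in> E - {e}" for e'
    proof -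
      have "\<not> e' \<subseteq> e" using e' simple_graph_edge_subset_eq[OF G e] by blast
      then have "?u \<in> var_ideal e'" by (auto simp: prod_Var_in_var_ideal_iff)
      moreover have "a \<in> var_ideal e'" using x(2) e' by (simp add: cover_ideal_eq_Inter)
      ultimately show ?thesis
        unfolding x(1) using is_ideal_var_ideal by (intro ideal_add ideal_mult_left)
    qed
    then show "x \<in> ?J" by blast
  qed
qed (rule Inter_var_ideal_other_edges_subset[OF dom e])

definition var_degree :: "'v \<Rightarrow> ('v, 'k::field) mpoly \<Rightarrow> nat" where
  "var_degree y p = Max (insert 0 ((\<lambda>n. lookup n y) ` keys p))"

definition top_part :: "'v \<Rightarrow> ('v, 'k::field) mpoly \<Rightarrow> ('v, 'k) mpoly" where
  "top_part y p = restrict_keys (\<lambda>n. lookup n y = var_degree y p) p"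

definition free_of_var :: "'v \<Rightarrow> ('v, 'k::field) mpoly set" where
  "free_of_var y = {p. \<forall>n\<in>keys p. lookup n y = 0}"

lemma var_degree_ge: "n \<in> keys p \<Longrightarrow> lookup n y \<le> var_degree y p"
  unfolding var_degree_def by (rule Max_ge) auto

lemma var_degree_le: "(\<And>n. n \<in> keys p \<Longrightarrow> lookup n y \<le> d) \<Longrightarrow> var_degree y p \<le> d"
  unfolding var_degree_def by (rule Max.boundedI) auto

lemma var_degree_attained:
  assumes "p \<noteq> 0"
  obtains n where "n \<in> keys p" "lookup n y = var_degree y p"
proof -
  have "var_degree y p \<in> insert 0 ((\<lambda>n. lookup n y) ` keys p)"
    unfolding var_degree_def by (rule Max_in) simp_all
  moreover from assms have "keys p \<noteq> {}" by simp
  then obtain n0 where "n0 \<in> keys p" by blast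
  ultimately show ?thesis using that var_degree_ge[OF \<open>n0 \<in> keys p\<close>, of y] by auto
qed

lemma var_degree_less:
  assumes "p \<noteq> 0" and "\<And>n. n \<in> keys p \<Longrightarrow> lookup n y < d"
  shows "var_degree y p < d"
proof -
  obtain n where "n \<in> keys p" "lookup n y = var_degree y p"
    using var_degree_attained[OF assms(1)] .
  with assms(2)[of n] show ?thesis by simp
qed

lemma keys_top_part: "keys (top_part y p) = {n \<in> keys p. lookup n y = var_degree y p}"
  by (simp add: top_part_def keys_restrict_keys)

lemma top_part_neq_0: "p \<noteq> 0 \<Longrightarrow> top_part y p \<noteq> 0"
  by (erule var_degree_attained[where y=y]) (auto simp flip: keys_eq_empty simp: keys_top_part)

lemma keys_diff_top_part: "keys (p - top_part y p) = {n \<in> keys p. lookup n y < var_degree y p}"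
proof -
  have "p - top_part y p = restrict_keys (\<lambda>n. lookup n y \<noteq> var_degree y p) p"
    using restrict_keys_split[of p "\<lambda>n. lookup n y = var_degree y p"]
    unfolding top_part_def by (simp add: algebra_simps)
  then show ?thesis using var_degree_ge[of _ p y] by (force simp: keys_restrict_keys)
qed

lemma var_degree_free_of_var: "p \<in> free_of_var y \<Longrightarrow> var_degree y p = 0"
  unfolding free_of_var_def by (rule antisym[OF var_degree_le]) auto

lemma top_part_free_of_var:
  assumes "p \<in> free_of_var y"
  shows "top_part y p = p"
proof (rule poly_mapping_eqI)
  fix n
  show "lookup (top_part y p) n = lookup p n"
    using assms by (cases "n \<in> keys p")
      (auto simp: top_part_def lookup_restrict_keys free_of_var_def var_degree_free_of_var in_keys_iff)
qed

lemma free_of_var_iff_var_degree: "p \<in> free_of_var y \<longleftrightarrow> var_degree y p = 0"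
proof
  assume "var_degree y p = 0"
  then show "p \<in> free_of_var y" using var_degree_ge[of _ p y] by (auto simp: free_of_var_def)
qed (rule var_degree_free_of_var)

lemma keys_times_lookup_decomp:
  assumes "\<And>n. n \<in> keys a \<Longrightarrow> P (lookup n y)" "\<And>n. n \<in> keys b \<Longrightarrow> Q (lookup n y)"
  shows "\<forall>n\<in>keys (a * b :: ('v, 'k::field) mpoly). \<exists>i j. P i \<and> Q j \<and> lookup n y = i + j"
proof
  fix n assume "n \<in> keys (a * b)"
  then obtain x z where "n = x + z" "x \<in> keys a" "z \<in> keys b" using keys_mult[of a b] by blast
  then show "\<exists>i j. P i \<and> Q j \<and> lookup n y = i + j" using assms by (auto simp: lookup_add)
qed

lemma free_of_var_mult: "p \<in> free_of_var y \<Longrightarrow> q \<in> free_of_var y \<Longrightarrow> p * q \<in> free_of_var y"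
  unfolding free_of_var_def using keys_times_lookup_decomp[of p "\<lambda>i. i = 0" y q "\<lambda>j. j = 0"] by auto

lemma free_of_var_power: "p \<in> free_of_var y \<Longrightarrow> p ^ k \<in> free_of_var y"
proof (induction k)
  case 0
  show ?case by (simp add: free_of_var_def)
next
  case (Suc k)
  then show ?case using free_of_var_mult by simp
qed

lemma keys_times_minus_top_parts:
  fixes p q :: "('v, 'k::field) mpoly"
  shows "\<forall>n\<in>keys (p * q - top_part y p * top_part y q). lookup n y < var_degree y p + var_degree y q"
proof -
  let ?dp = "var_degree y p" and ?dq = "var_degree y q"
  let ?tp = "top_part y p" and ?tq = "top_part y q"
  have ktp: "\<And>n. n \<in> keys ?tp \<Longrightarrow> lookup n y = ?dp"
    and klp: "\<And>n. n \<in> keys (p - ?tp) \<Longrightarrow> lookup n y < ?dp"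
    and klq: "\<And>n. n \<in> keys (q - ?tq) \<Longrightarrow> lookup n y < ?dq"
    and kq: "\<And>n. n \<in> keys q \<Longrightarrow> lookup n y \<le> ?dq"
    by (auto simp: keys_top_part keys_diff_top_part var_degree_ge)
  have "\<forall>n\<in>keys (?tp * (q - ?tq)). lookup n y < ?dp + ?dq"
    using keys_times_lookup_decomp[of ?tp "\<lambda>i. i = ?dp" y "q - ?tq" "\<lambda>j. j < ?dq"] ktp klq
    by fastforce
  moreover have "\<forall>n\<in>keys ((p - ?tp) * q). lookup n y < ?dp + ?dq"
    using keys_times_lookup_decomp[of "p - ?tp" "\<lambda>i. i < ?dp" y q "\<lambda>j. j \<le> ?dq"] klp kq
    by fastforce
  moreover have "p * q - ?tp * ?tq = ?tp * (q - ?tq) + (p - ?tp) * q" by (simp add: algebra_simps)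
  then have "keys (p * q - ?tp * ?tq) \<subseteq> keys (?tp * (q - ?tq)) \<union> keys ((p - ?tp) * q)"
    by (simp only: keys_add)
  ultimately show ?thesis by blast
qed

text \<open>The part of \<open>p * q\<close> of top degree in \<open>y\<close> comes only from the product of the top
  parts, which does not vanish since there are no zero divisors.\<close>

lemma var_degree_mult_top_part_mult:
  fixes p q :: "('v::countable, 'k::field) mpoly"
  assumes p: "p \<noteq> 0" and q: "q \<noteq> 0"
  shows "var_degree y (p * q) = var_degree y p + var_degree y q"
    and "top_part y (p * q) = top_part y p * top_part y q"
proof -
  let ?d = "var_degree y p + var_degree y q"
  let ?T = "top_part y p * top_part y q" and ?R = "p * q - top_part y p * top_part y q"
  have "\<And>n. n \<in> keys (top_part y p) \<Longrightarrow> lookup n y = var_degree y p"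
    "\<And>n. n \<in> keys (top_part y q) \<Longrightarrow> lookup n y = var_degree y q"
    by (auto simp: keys_top_part)
  then have top: "\<forall>n\<in>keys ?T. lookup n y = ?d"
    using keys_times_lookup_decomp[of "top_part y p" "\<lambda>i. i = var_degree y p" y
        "top_part y q" "\<lambda>j. j = var_degree y q"]
    by auto
  have low: "\<forall>n\<in>keys ?R. lookup n y < ?d" by (rule keys_times_minus_top_parts)
  have at_top: "lookup (p * q) n = lookup ?T n" if "lookup n y = ?d" for n
  proof -
    have "n \<notin> keys ?R" using low that by auto
    then show ?thesis by (simp add: lookup_minus in_keys_iff)
  qed
  have below: "lookup n y \<le> ?d" if "n \<in> keys (p * q)" for n
  proof -
    have "n \<in> keys ?T \<or> n \<in> keys ?R" using keys_add[of ?T ?R] that by auto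
    then show ?thesis using top low by force
  qed
  have "?T \<noteq> 0"
    using top_part_neq_0[OF p] top_part_neq_0[OF q] by (simp add: mpoly_mult_eq_0_iff)
  then have "keys ?T \<noteq> {}" by simp
  then obtain n0 where n0: "n0 \<in> keys ?T" by blast
  then have "n0 \<in> keys (p * q)" using at_top[of n0] top by (simp add: in_keys_iff)
  then have "?d \<le> var_degree y (p * q)" using var_degree_ge[of n0 "p * q" y] top n0 by simp
  moreover have "var_degree y (p * q) \<le> ?d" by (rule var_degree_le[OF below])
  ultimately show deg: "var_degree y (p * q) = ?d" by simp
  show "top_part y (p * q) = ?T"
  proof (rule poly_mapping_eqI)
    fix n
    show "lookup (top_part y (p * q)) n = lookup ?T n"
    proof (cases "lookup n y = ?d")
      case True
      then show ?thesis by (simp add: top_part_def lookup_restrict_keys deg at_top)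
    next
      case False
      then have "n \<notin> keys ?T" using top by auto
      then show ?thesis using False by (simp add: top_part_def lookup_restrict_keys deg in_keys_iff)
    qed
  qed
qed

lemma var_degree_Var_power: "var_degree y (Var y ^ e :: ('v, 'k::field) mpoly) = e"
proof (rule antisym)
  show "var_degree y (Var y ^ e :: ('v, 'k) mpoly) \<le> e"
    by (rule var_degree_le) (simp add: Var_power)
  have "single y e \<in> keys (Var y ^ e :: ('v, 'k) mpoly)" by (simp add: Var_power)
  from var_degree_ge[OF this, of y] show "e \<le> var_degree y (Var y ^ e :: ('v, 'k) mpoly)"
    by simp
qed

lemma top_part_Var_power: "top_part y (Var y ^ e :: ('v, 'k::field) mpoly) = Var y ^ e"
  unfolding top_part_def var_degree_Var_power
  by (rule poly_mapping_eqI) (auto simp: Var_power lookup_restrict_keys lookup_single when_def)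

lemma top_part_factor:
  fixes p :: "('v::countable, 'k::field) mpoly"
  assumes "p \<noteq> 0"
  obtains c where "c \<in> free_of_var y" "c \<noteq> 0" "top_part y p = Var y ^ var_degree y p * c"
proof -
  let ?m = "single y (var_degree y p)"
  have "\<forall>n\<in>keys (top_part y p). exp_dvd ?m n"
    by (auto simp: keys_top_part exp_dvd_def lookup_single when_def)
  then obtain c where c: "top_part y p = single ?m 1 * c" using single_factor_of_exp_dvd by blast
  have "\<forall>n\<in>keys c. lookup n y = 0"
  proof
    fix n assume "n \<in> keys c"
    then have "?m + n \<in> keys (top_part y p)" using keys_single_times[of 1 ?m c] c by simp
    then show "lookup n y = 0" by (simp add: keys_top_part lookup_add)
  qed
  moreover have "c \<noteq> 0" using c top_part_neq_0[OF assms, of y] by auto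
  ultimately show ?thesis using that c by (simp add: free_of_var_def Var_power)
qed

section \<open>Height of the cover ideal\<close>

lemma pseudo_division_step:
  fixes c h p :: "('v::countable, 'k::field) mpoly"
  assumes c: "c \<in> free_of_var y" "c \<noteq> 0"
    and h: "h \<noteq> 0" "top_part y h = Var y ^ var_degree y h * c"
    and p: "p \<noteq> 0" "var_degree y h \<le> var_degree y p"
  shows "\<exists>x. \<forall>n\<in>keys (c * p - x * h). lookup n y < var_degree y p"
proof -
  let ?d = "var_degree y p" and ?e = "var_degree y p - var_degree y h"
  let ?Y = "\<lambda>i. Var y ^ i :: ('v, 'k) mpoly"
  obtain c' where c': "c' \<in> free_of_var y" "c' \<noteq> 0" "top_part y p = ?Y ?d * c'"
    using top_part_factor[OF p(1)] .
  define x where "x = ?Y ?e * c'"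
  have Y: "?Y i \<noteq> 0" for i by (rule mpoly_power_neq_0[OF Var_neq_0])
  have x: "x \<noteq> 0" "var_degree y x = ?e" "top_part y x = x"
    using var_degree_mult_top_part_mult[OF Y c'(2)] c'(2) Y
    by (simp_all add: x_def var_degree_Var_power top_part_Var_power var_degree_free_of_var[OF c'(1)]
        top_part_free_of_var[OF c'(1)] mpoly_mult_eq_0_iff)
  have deg_cp: "var_degree y (c * p) = ?d" and top_cp: "top_part y (c * p) = c * (?Y ?d * c')"
    using var_degree_mult_top_part_mult[OF c(2) p(1)] c'(3)
    by (simp_all add: var_degree_free_of_var[OF c(1)] top_part_free_of_var[OF c(1)])
  have deg_xh: "var_degree y (x * h) = ?d" and top_xh: "top_part y (x * h) = x * (?Y (var_degree y h) * c)"
    using var_degree_mult_top_part_mult[OF x(1) h(1)] x(2,3) h(2) p(2) by simp_all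
  have Y_split: "?Y ?d = ?Y ?e * ?Y (var_degree y h)" using p(2) by (simp flip: power_add)
  have same_top: "top_part y (c * p) = top_part y (x * h)"
    unfolding top_cp top_xh by (simp add: x_def Y_split ac_simps)
  have "c * p - x * h = (c * p - top_part y (c * p)) - (x * h - top_part y (x * h))"
    by (simp add: same_top)
  then have "keys (c * p - x * h) \<subseteq> keys (c * p - top_part y (c * p)) \<union> keys (x * h - top_part y (x * h))"
    by (metis keys_diff)
  then show ?thesis using deg_cp deg_xh by (auto simp: keys_diff_top_part)
qed

lemma pseudo_division:
  fixes c h p :: "('v::countable, 'k::field) mpoly"
  assumes c: "c \<in> free_of_var y" "c \<noteq> 0"
    and h: "h \<noteq> 0" "top_part y h = Var y ^ var_degree y h * c"
  shows "\<exists>k q r. c ^ k * p = q * h + r \<and> (\<forall>n\<in>keys r. lookup n y < var_degree y h)"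
proof (induction "var_degree y p" arbitrary: p rule: less_induct)
  case less
  show ?case
  proof (cases "\<forall>n\<in>keys p. lookup n y < var_degree y h")
    case True
    then have "c ^ 0 * p = 0 * h + p \<and> (\<forall>n\<in>keys p. lookup n y < var_degree y h)" by simp
    then show ?thesis by blast
  next
    case False
    then obtain n where "n \<in> keys p" "var_degree y h \<le> lookup n y" by auto
    then have p: "p \<noteq> 0" "var_degree y h \<le> var_degree y p"
      using var_degree_ge[of n p y] by auto
    obtain x where x: "\<forall>n\<in>keys (c * p - x * h). lookup n y < var_degree y p"
      using pseudo_division_step[OF c h p] by blast
    show ?thesis
    proof (cases "c * p - x * h = 0")
      case True
      then have "c ^ 1 * p = x * h + 0 \<and> (\<forall>n\<in>keys (0 :: ('v, 'k) mpoly). lookup n y < var_degree y h)"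
        by simp
      then show ?thesis by blast
    next
      case False
      then have "var_degree y (c * p - x * h) < var_degree y p"
        using x by (intro var_degree_less) auto
      then obtain k q r where qr: "c ^ k * (c * p - x * h) = q * h + r"
        and r: "\<forall>n\<in>keys r. lookup n y < var_degree y h"
        using less by blast
      from qr have "c ^ Suc k * p = (q + c ^ k * x) * h + r" by (simp add: algebra_simps)
      with r show ?thesis by blast
    qed
  qed
qed

lemma exists_min_var_degree:
  assumes "p \<in> Q" "p \<noteq> 0"
  obtains h where "h \<in> Q" "h \<noteq> 0" "\<And>q. q \<in> Q \<Longrightarrow> q \<noteq> 0 \<Longrightarrow> var_degree y h \<le> var_degree y q"
  using ex_has_least_nat[of "\<lambda>q. q \<in> Q \<and> q \<noteq> 0" p "var_degree y"] assms by blast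

lemma pseudo_divides_of_min_var_degree:
  fixes Q :: "('v::countable, 'k::field) mpoly set"
  assumes Q: "is_ideal Q" and h: "h \<in> Q" "h \<noteq> 0"
    and h_min: "\<And>p. p \<in> Q \<Longrightarrow> p \<noteq> 0 \<Longrightarrow> var_degree y h \<le> var_degree y p"
    and c: "c \<in> free_of_var y" "c \<noteq> 0" "top_part y h = Var y ^ var_degree y h * c"
    and p: "p \<in> Q"
  shows "\<exists>k q. c ^ k * p = q * h"
proof -
  obtain k q r where qr: "c ^ k * p = q * h + r" and r: "\<forall>n\<in>keys r. lookup n y < var_degree y h"
    using pseudo_division[OF c(1,2) h(2) c(3)] by blast
  have "r = c ^ k * p - q * h" using qr by simp
  also have "\<dots> \<in> Q" using Q h(1) p by (intro ideal_diff ideal_mult_left)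
  finally have "r \<in> Q" .
  have "r = 0"
  proof (rule ccontr)
    assume "r \<noteq> 0"
    with r have "var_degree y r < var_degree y h" by (intro var_degree_less) auto
    with h_min[OF \<open>r \<in> Q\<close> \<open>r \<noteq> 0\<close>] show False by simp
  qed
  with qr show ?thesis by auto
qed

text \<open>Over the field of rational functions in the other variables, the polynomials in \<open>y\<close> form
  a principal ideal domain, so a chain of two nonzero primes must meet the denominators.
  Concretely, an element \<open>h\<close> of minimal \<open>y\<close>-degree in \<open>Q\<^sub>2\<close> pseudo-divides everything in \<open>Q\<^sub>2\<close>.\<close>

lemma strict_prime_chain_meets_free_of_var:
  fixes Q1 Q2 :: "('v::countable, 'k::field) mpoly set"
  assumes P1: "is_prime_ideal Q1" and P2: "is_prime_ideal Q2" and "Q1 \<subset> Q2" and "Q1 \<noteq> {0}"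
  shows "\<exists>p\<in>Q2. p \<in> free_of_var y \<and> p \<noteq> 0"
proof (rule ccontr)
  assume "\<not> ?thesis"
  then have avoid: "p = 0" if "p \<in> Q2" "p \<in> free_of_var y" for p using that by blast
  have I1: "is_ideal Q1" and I2: "is_ideal Q2" using P1 P2 by (simp_all add: prime_ideal_is_ideal)
  obtain f0 where "f0 \<in> Q1" "f0 \<noteq> 0" using \<open>Q1 \<noteq> {0}\<close> ideal_0[OF I1] by blast
  then obtain f where f: "f \<in> Q1" "f \<noteq> 0"
    and f_min: "\<And>p. p \<in> Q1 \<Longrightarrow> p \<noteq> 0 \<Longrightarrow> var_degree y f \<le> var_degree y p"
    using exists_min_var_degree[of f0 Q1 y] by blast
  then obtain h where h: "h \<in> Q2" "h \<noteq> 0"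
    and h_min: "\<And>p. p \<in> Q2 \<Longrightarrow> p \<noteq> 0 \<Longrightarrow> var_degree y h \<le> var_degree y p"
    using \<open>Q1 \<subset> Q2\<close> exists_min_var_degree[of f Q2 y] by blast
  obtain g where g: "g \<in> Q2" "g \<notin> Q1" using \<open>Q1 \<subset> Q2\<close> by blast
  obtain c where c: "c \<in> free_of_var y" "c \<noteq> 0" "top_part y h = Var y ^ var_degree y h * c"
    using top_part_factor[OF h(2)] .
  have c_power: "c ^ k \<notin> Q2" for k
    using avoid free_of_var_power[OF c(1)] mpoly_power_neq_0[OF c(2)] by blast
  have "var_degree y h \<noteq> 0" using avoid h by (auto simp: free_of_var_iff_var_degree)
  note divides = pseudo_divides_of_min_var_degree[OF I2 h h_min c]
  obtain k q where kq: "c ^ k * f = q * h" using divides f(1) \<open>Q1 \<subset> Q2\<close> by blast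
  obtain k' q' where kq': "c ^ k' * g = q' * h" using divides g(1) by blast
  show False
  proof (cases "h \<in> Q1")
    case True
    then have "c ^ k' * g \<in> Q1" unfolding kq' by (rule ideal_mult_left[OF I1])
    then show False using prime_ideal_mult[OF P1] c_power g \<open>Q1 \<subset> Q2\<close> by blast
  next
    case False
    have "q * h \<in> Q1" unfolding kq[symmetric] using f by (intro ideal_mult_left[OF I1])
    then have "q \<in> Q1" using prime_ideal_mult[OF P1] False by blast
    have "c ^ k * f \<noteq> 0" using mpoly_power_neq_0[OF c(2)] f(2) by (simp add: mpoly_mult_eq_0_iff)
    then have "q \<noteq> 0" unfolding kq by auto
    have "var_degree y (c ^ k * f) = var_degree y f"
      using var_degree_mult_top_part_mult(1)[OF mpoly_power_neq_0[OF c(2)] f(2)]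
        free_of_var_power[OF c(1)] by (simp add: var_degree_free_of_var)
    moreover have "var_degree y (q * h) = var_degree y q + var_degree y h"
      using var_degree_mult_top_part_mult(1)[OF \<open>q \<noteq> 0\<close> h(2)] .
    ultimately have "var_degree y q < var_degree y f"
      using kq \<open>var_degree y h \<noteq> 0\<close> by simp
    with f_min[OF \<open>q \<in> Q1\<close> \<open>q \<noteq> 0\<close>] show False by simp
  qed
qed

text \<open>Every monomial of \<open>p\<close> contains \<open>t\<^sub>a\<close>; dividing out the largest common power of \<open>t\<^sub>a\<close>
  leaves a factor outside \<open>var_ideal {a, b}\<close>, hence outside \<open>Q\<close>.\<close>

lemma Var_in_prime_below_var_ideal_pair:
  fixes Q :: "('v::countable, 'k::field) mpoly set"
  assumes "a \<noteq> b" and Q: "is_prime_ideal Q" "Q \<subseteq> var_ideal {a, b}"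
    and p: "p \<in> Q" "p \<in> free_of_var b" "p \<noteq> 0"
  shows "Var a \<in> Q"
proof -
  define k where "k = Min ((\<lambda>n. lookup n a) ` keys p)"
  have "keys p \<noteq> {}" using p(3) by simp
  then have "k \<in> (\<lambda>n. lookup n a) ` keys p" unfolding k_def by (intro Min_in) auto
  then obtain n1 where n1: "n1 \<in> keys p" "lookup n1 a = k" by blast
  have "\<forall>n\<in>keys p. exp_dvd (single a k) n"
    by (auto simp: exp_dvd_def k_def lookup_single when_def)
  then obtain p' where p': "p = single (single a k) 1 * p'"
    using single_factor_of_exp_dvd by blast
  then obtain n1' where n1': "n1' \<in> keys p'" "n1 = single a k + n1'"
    using n1(1) keys_single_times[of 1 "single a k" p'] by auto
  have "lookup n1' a = 0" using n1(2) n1'(2) by (simp add: lookup_add)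
  moreover have "lookup n1 b = 0" using p(2) n1(1) by (simp add: free_of_var_def)
  then have "lookup n1' b = 0" using n1'(2) \<open>a \<noteq> b\<close> by (simp add: lookup_add lookup_single)
  ultimately have "p' \<notin> var_ideal {a, b}"
    using n1'(1) by (auto simp: var_ideal_def monomial_ideal_def in_keys_iff)
  with Q(2) have "p' \<notin> Q" by blast
  moreover have "single (single a k) 1 * p' \<in> Q" using p(1) p' by simp
  ultimately have "single (single a k) 1 \<in> Q" using prime_ideal_mult[OF Q(1)] by blast
  then show ?thesis using prime_ideal_power[OF Q(1)] by (simp add: Var_power)
qed

lemma eq_var_ideal_pair_if_meets_free_of_var:
  fixes Q :: "('v::countable, 'k::field) mpoly set"
  assumes "a \<noteq> b" and Q: "is_prime_ideal Q" "Q \<subseteq> var_ideal {a, b}"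
    and free: "\<And>y. \<exists>p\<in>Q. p \<in> free_of_var y \<and> p \<noteq> 0"
  shows "Q = var_ideal {a, b}"
proof
  have "Q \<subseteq> var_ideal {b, a}" using Q(2) by (simp add: insert_commute)
  moreover obtain pa where "pa \<in> Q" "pa \<in> free_of_var a" "pa \<noteq> 0" using free[of a] by blast
  ultimately have "Var b \<in> Q"
    using Var_in_prime_below_var_ideal_pair[OF \<open>a \<noteq> b\<close>[symmetric] Q(1)] by blast
  moreover obtain pb where "pb \<in> Q" "pb \<in> free_of_var b" "pb \<noteq> 0" using free[of b] by blast
  then have "Var a \<in> Q" using Var_in_prime_below_var_ideal_pair[OF \<open>a \<noteq> b\<close> Q] by blast
  ultimately show "var_ideal {a, b} \<subseteq> Q"
    by (intro var_ideal_least prime_ideal_is_ideal[OF Q(1)]) auto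
qed (rule Q(2))

lemma prime_height_var_ideal_pair_le:
  assumes "a \<noteq> b"
  shows "prime_height (var_ideal {a, b} :: ('v::countable, 'k::field) mpoly set) \<le> 2"
  unfolding prime_height_def
proof (rule SUP_least, clarify)
  fix n and c :: "nat \<Rightarrow> ('v, 'k) mpoly set"
  assume top: "c n = var_ideal {a, b}" and prime: "\<forall>i\<le>n. is_prime_ideal (c i)"
    and strict: "\<forall>i<n. c i \<subset> c (Suc i)"
  show "enat n \<le> 2"
  proof (rule ccontr)
    assume "\<not> enat n \<le> 2"
    then have "3 \<le> n" by (simp add: numeral_eq_enat)
    then obtain j where n: "n = Suc (Suc (Suc j))"
      using le_Suc_ex[of 3 n] by (auto simp: numeral_3_eq_3)
    let ?Q0 = "c j" and ?Q1 = "c (Suc j)" and ?Q2 = "c (Suc (Suc j))"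
    have Q0: "?Q0 \<subset> ?Q1" and Q1: "?Q1 \<subset> ?Q2" and Q2: "?Q2 \<subset> var_ideal {a, b}"
      using strict top n by auto
    have P0: "is_prime_ideal ?Q0" and P1: "is_prime_ideal ?Q1" and P2: "is_prime_ideal ?Q2"
      using prime n by auto
    have "?Q1 \<noteq> {0}"
    proof
      assume "?Q1 = {0}"
      with Q0 have "?Q0 \<subseteq> {0}" "?Q0 \<noteq> {0}" by auto
      with ideal_0[OF prime_ideal_is_ideal[OF P0]] show False by blast
    qed
    then have free: "\<exists>p\<in>?Q2. p \<in> free_of_var y \<and> p \<noteq> 0" for y
      by (rule strict_prime_chain_meets_free_of_var[OF P1 P2 Q1])
    then have "?Q2 = var_ideal {a, b}"
      using eq_var_ideal_pair_if_meets_free_of_var[OF \<open>a \<noteq> b\<close> P2] Q2 by blast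
    with Q2 show False by blast
  qed
qed

lemma zero_prime_ideal: "is_prime_ideal ({0} :: ('v::countable, 'k::field) mpoly set)"
proof -
  have "(1 :: ('v, 'k) mpoly) \<notin> {0}" by simp
  then have "({0} :: ('v, 'k) mpoly set) \<noteq> UNIV" by blast
  then show ?thesis by (auto simp: is_prime_ideal_def is_ideal_def mpoly_mult_eq_0_iff)
qed

lemma two_le_prime_height_if_var_ideal_pair_subset:
  fixes P :: "('v::countable, 'k::field) mpoly set"
  assumes "a \<noteq> b" and P: "is_prime_ideal P" "var_ideal {a, b} \<subseteq> P"
  shows "2 \<le> prime_height P"
proof -
  define c :: "nat \<Rightarrow> ('v, 'k) mpoly set"
    where "c = (\<lambda>i. if i = 0 then {0} else if i = 1 then var_ideal {a} else P)"
  have "Var a \<in> var_ideal {a}" "Var a \<noteq> 0" "0 \<in> var_ideal {a}"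
    by (simp_all add: Var_in_var_ideal_iff Var_neq_0 ideal_0[OF is_ideal_var_ideal])
  then have "{0} \<subset> (var_ideal {a} :: ('v, 'k) mpoly set)" by blast
  moreover have "var_ideal {a} \<subset> P"
  proof -
    have "var_ideal {a} \<subseteq> (var_ideal {a, b} :: ('v, 'k) mpoly set)" by (simp add: var_ideal_subset_iff)
    moreover have "Var b \<in> P" "Var b \<notin> (var_ideal {a} :: ('v, 'k) mpoly set)"
      using P(2) \<open>a \<noteq> b\<close> by (auto simp: Var_in_var_ideal_iff)
    ultimately show ?thesis using P(2) by blast
  qed
  ultimately have "\<forall>i<2. c i \<subset> c (Suc i)" by (auto simp: c_def less_2_cases_iff)
  moreover have "\<forall>i\<le>2. is_prime_ideal (c i)"
    using zero_prime_ideal prime_var_ideal[of "{a}"] P(1) by (auto simp: c_def)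
  moreover have "c 2 = P" by (simp add: c_def)
  ultimately have "enat 2 \<le> prime_height P"
    unfolding prime_height_def by (intro SUP_upper) blast
  then show ?thesis by (simp add: numeral_eq_enat)
qed

lemma height_cover_ideal:
  assumes G: "simple_graph E" and "E \<noteq> {}"
  shows "height (cover_ideal E :: ('v::finite, 'k::field) mpoly set) = 2"
proof (rule antisym)
  obtain e where e: "e \<in> E" using \<open>E \<noteq> {}\<close> by blast
  obtain a b where ab: "a \<noteq> b" "e = {a, b}" using simple_graph_edgeE[OF G e] .
  have "height (cover_ideal E :: ('v, 'k) mpoly set) \<le> prime_height (var_ideal e :: ('v, 'k) mpoly set)"
    unfolding height_def using e ab prime_var_ideal[of e]
    by (intro INF_lower) (auto simp: cover_ideal_eq_Inter)
  also have "\<dots> \<le> 2" unfolding ab(2) by (rule prime_height_var_ideal_pair_le[OF ab(1)])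
  finally show "height (cover_ideal E :: ('v, 'k) mpoly set) \<le> 2" .
  show "2 \<le> height (cover_ideal E :: ('v, 'k) mpoly set)"
    unfolding height_def
  proof (rule INF_greatest, clarify)
    fix P :: "('v, 'k) mpoly set"
    assume P: "is_prime_ideal P" "cover_ideal E \<subseteq> P"
    have "finite E" by simp
    then obtain e where "e \<in> E" "var_ideal e \<subseteq> P"
      using P prime_ideal_avoidance[of P E var_ideal] is_ideal_var_ideal
      by (auto simp: cover_ideal_eq_Inter)
    moreover obtain a b where "a \<noteq> b" "e = {a, b}" using simple_graph_edgeE[OF G \<open>e \<in> E\<close>] .
    ultimately show "2 \<le> prime_height P" using two_le_prime_height_if_var_ideal_pair_subset[OF _ P(1)] by blast
  qed
qed

section \<open>Projective dimension of the quotient by the cover ideal\<close>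

lemma mat_app_1: "mat_app 1 b M z = (\<lambda>j. if j = 0 then (\<Sum>k<b. M 0 k * z k) else 0)"
  by (auto simp: mat_app_def)

lemma fun_at_0_eq_iff:
  "(\<lambda>j::nat. if j = 0 then a else 0) = (\<lambda>j. if j = 0 then b else 0) \<longleftrightarrow> a = b"
proof
  assume "(\<lambda>j::nat. if j = 0 then a else 0) = (\<lambda>j. if j = 0 then b else 0)"
  from fun_cong[OF this, of 0] show "a = b" by simp
qed (rule arg_cong)

lemma mem_iff_kernel_at_0: "p \<in> I \<longleftrightarrow> (\<lambda>j. if j = 0 then p else 0) \<in> kernel_at I r d 0"
  by (simp add: kernel_at_def free_mod_def)

lemma free_resolution_length_0:
  assumes "is_free_resolution I 0 r d"
  shows "I = {0}"
proof -
  have K: "kernel_at I r d 0 = {\<lambda>_. 0}" using assms by (simp add: is_free_resolution_def)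
  have "p \<in> I \<longleftrightarrow> p = 0" for p
  proof -
    have "p \<in> I \<longleftrightarrow> (\<lambda>j::nat. if j = 0 then p else 0) \<in> {\<lambda>_. 0}"
      by (simp only: mem_iff_kernel_at_0[of p I r d] K)
    also have "\<dots> \<longleftrightarrow> p = 0" using fun_at_0_eq_iff[of p 0] by simp
    finally show ?thesis .
  qed
  then show ?thesis by auto
qed

lemma mem_iff_free_resolution_length_1:
  assumes "is_free_resolution I 1 r d"
  shows "p \<in> I \<longleftrightarrow> (\<exists>z\<in>free_mod (r 1). p = (\<Sum>k<r 1. d 1 0 k * z k))"
proof -
  have "kernel_at I r d 0 = mat_app 1 (r 1) (d 1) ` free_mod (r 1)"
    using assms by (simp add: is_free_resolution_def image_at_def)
  then have "p \<in> I \<longleftrightarrow> (\<lambda>j::nat. if j = 0 then p else 0) \<in> mat_app 1 (r 1) (d 1) ` free_mod (r 1)"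
    by (simp only: mem_iff_kernel_at_0[of p I r d])
  also have "\<dots> \<longleftrightarrow> (\<exists>z\<in>free_mod (r 1). (\<lambda>j::nat. if j = 0 then p else 0) = mat_app 1 (r 1) (d 1) z)"
    by (rule image_iff)
  finally show ?thesis by (simp only: mat_app_1 fun_at_0_eq_iff)
qed

text \<open>A second column \<open>(M\<^sub>0\<^sub>1, -M\<^sub>0\<^sub>0)\<close> would give a nonzero syzygy unless the first
  column vanishes, and a vanishing column contradicts injectivity as well.\<close>

lemma free_resolution_length_1_rank_le_1:
  fixes I :: "'a::comm_ring_1 set"
  assumes res: "is_free_resolution I 1 r d"
  shows "r 1 \<le> 1"
proof (rule ccontr)
  assume "\<not> r 1 \<le> 1"
  then have R: "2 \<le> r 1" by simp
  let ?M = "d 1 0"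
  have inj: "z = (\<lambda>_. 0)" if z: "z \<in> free_mod (r 1)" "(\<Sum>k<r 1. ?M k * z k) = 0" for z
  proof -
    have r0: "r 0 = 1" and K1: "kernel_at I r d 1 = {\<lambda>_. 0}"
      using res by (simp_all add: is_free_resolution_def)
    have "mat_app (r 0) (r 1) (d 1) z = (\<lambda>_. 0)" unfolding r0 mat_app_1 z(2) by simp
    with z(1) have "z \<in> kernel_at I r d 1" by (simp add: kernel_at_def)
    with K1 show ?thesis by simp
  qed
  have sum_01: "(\<Sum>k<r 1. ?M k * z k) = ?M 0 * z 0 + ?M 1 * z 1" if "\<forall>k\<ge>2. z k = 0"
    for z :: "nat \<Rightarrow> 'a"
  proof -
    have "(\<Sum>k<r 1. ?M k * z k) = (\<Sum>k\<in>{0, 1}. ?M k * z k)"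
      using R that by (intro sum.mono_neutral_right) auto
    then show ?thesis by simp
  qed
  define z :: "nat \<Rightarrow> 'a" where "z = (\<lambda>k. if k = 0 then ?M 1 else if k = 1 then - ?M 0 else 0)"
  have z_mem: "z \<in> free_mod (r 1)" using R by (simp add: free_mod_def z_def)
  have z_high: "\<forall>k\<ge>2. z k = 0" by (simp add: z_def)
  have "(\<Sum>k<r 1. ?M k * z k) = 0" unfolding sum_01[OF z_high] by (simp add: z_def mult.commute)
  with z_mem have "z = (\<lambda>_. 0)" by (rule inj)
  then have "z 1 = 0" by simp
  then have "?M 0 = 0" by (simp add: z_def)
  define e :: "nat \<Rightarrow> 'a" where "e = (\<lambda>k. if k = 0 then 1 else 0)"
  have e_mem: "e \<in> free_mod (r 1)" using R by (simp add: free_mod_def e_def)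
  have e_high: "\<forall>k\<ge>2. e k = 0" by (simp add: e_def)
  have "(\<Sum>k<r 1. ?M k * e k) = 0" unfolding sum_01[OF e_high] using \<open>?M 0 = 0\<close> by (simp add: e_def)
  with e_mem have "e = (\<lambda>_. 0)" by (rule inj)
  then have "e 0 = 0" by simp
  then show False by (simp add: e_def)
qed

lemma principal_if_free_resolution_length_le_1:
  fixes I :: "'a::comm_ring_1 set"
  assumes "is_free_resolution I n r d" "n \<le> 1"
  shows "\<exists>g. I = range ((*) g)"
proof (cases n)
  case 0
  then have "I = range ((*) 0)" using assms free_resolution_length_0 by simp
  then show ?thesis ..
next
  case (Suc m)
  with assms have res: "is_free_resolution I 1 r d" by simp
  show ?thesis
  proof (cases "r 1 = 0")
    case True
    have "(\<lambda>_. 0) \<in> (free_mod 0 :: (nat \<Rightarrow> 'a) set)" by (simp add: free_mod_def)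
    with True have "I = range ((*) 0)" by (auto simp: mem_iff_free_resolution_length_1[OF res])
    then show ?thesis ..
  next
    case False
    with free_resolution_length_1_rank_le_1[OF res] have "r 1 = 1" by simp
    have "p \<in> I \<longleftrightarrow> (\<exists>t. p = d 1 0 0 * t)" for p
    proof
      assume "p \<in> I"
      then obtain z where "p = (\<Sum>k<1. d 1 0 k * z k)"
        unfolding mem_iff_free_resolution_length_1[OF res] \<open>r 1 = 1\<close> by blast
      then show "\<exists>t. p = d 1 0 0 * t" by auto
    next
      assume "\<exists>t. p = d 1 0 0 * t"
      then obtain t where "p = d 1 0 0 * t" ..
      moreover have "(\<lambda>k. if k = 0 then t else 0) \<in> free_mod 1" by (simp add: free_mod_def)
      ultimately show "p \<in> I"
        unfolding mem_iff_free_resolution_length_1[OF res] \<open>r 1 = 1\<close>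
        by (intro bexI[of _ "\<lambda>k. if k = 0 then t else 0"]) simp_all
    qed
    then have "I = range ((*) (d 1 0 0))" by auto
    then show ?thesis ..
  qed
qed

lemma two_le_proj_dim_quot:
  assumes "\<nexists>g. I = range ((*) g)"
  shows "2 \<le> proj_dim_quot I"
  unfolding proj_dim_quot_def
proof (rule INF_greatest, clarify)
  fix n r d assume "is_free_resolution I n r d"
  with assms principal_if_free_resolution_length_le_1 have "\<not> n \<le> 1" by blast
  then show "2 \<le> enat n" by (simp add: numeral_eq_enat)
qed

text \<open>A generator \<open>g\<close> would divide, for every vertex \<open>v\<close>, the product of all variables
  but \<open>t\<^sub>v\<close>, so \<open>g\<close> would be a constant; but \<open>g\<close> lies in every edge prime.\<close>

lemma cover_ideal_not_principal:
  assumes G: "simple_graph E" and "E \<noteq> {}"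
  shows "\<nexists>g. (cover_ideal E :: ('v::finite, 'k::field) mpoly set) = range ((*) g)"
proof
  assume "\<exists>g. (cover_ideal E :: ('v, 'k) mpoly set) = range ((*) g)"
  then obtain g :: "('v, 'k) mpoly" where g: "cover_ideal E = range ((*) g)" by blast
  have divides: "\<exists>t. (\<Prod>v\<in>C. Var v) = g * t" if "vertex_cover E C" for C
  proof -
    have "(\<Prod>v\<in>C. Var v :: ('v, 'k) mpoly) \<in> cover_ideal E"
      using that by (simp add: prod_Var_in_cover_ideal_iff)
    then have "(\<Prod>v\<in>C. Var v) \<in> range ((*) g)" by (simp only: g)
    then show ?thesis by auto
  qed
  have "g \<in> cover_ideal E" unfolding g by (metis mult.right_neutral rangeI)
  obtain e where "e \<in> E" using \<open>E \<noteq> {}\<close> by blast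
  have "vertex_cover E UNIV" using simple_graph_edge_neq_empty[OF G] by (auto simp: vertex_cover_def)
  then have "g \<noteq> 0" using divides prod_Var_neq_0 by fastforce
  then obtain n where "n \<in> keys g" by fastforce
  moreover have "g \<in> var_ideal e" using \<open>g \<in> cover_ideal E\<close> \<open>e \<in> E\<close> by (auto simp: cover_ideal_eq_Inter)
  ultimately obtain v where "v \<in> keys n" by (auto simp: var_ideal_def monomial_ideal_def)
  then have "0 < var_degree v g" using var_degree_ge[OF \<open>n \<in> keys g\<close>, of v] by (simp add: in_keys_iff)
  have "vertex_cover E (- {v})"
    using G by (auto simp: vertex_cover_def elim!: simple_graph_edgeE)
  then obtain t where t: "(\<Prod>v\<in>- {v}. Var v) = g * t" using divides by blast
  then have "t \<noteq> 0" using prod_Var_neq_0 by fastforce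
  have "var_degree v (\<Prod>v\<in>- {v}. Var v :: ('v, 'k) mpoly) = 0"
    by (auto simp: free_of_var_iff_var_degree[symmetric] free_of_var_def prod_Var_eq_single lookup_set_exp)
  with t var_degree_mult_top_part_mult(1)[OF \<open>g \<noteq> 0\<close> \<open>t \<noteq> 0\<close>, of v] \<open>0 < var_degree v g\<close>
  show False by simp
qed

lemma ideal_gen_image_eq_combinations:
  fixes g :: "nat \<Rightarrow> 'a::comm_ring_1"
  shows "ideal_gen (g ` {..<N}) = {\<Sum>k<N. g k * y k | y. True}"
proof
  let ?C = "{\<Sum>k<N. g k * y k | y. True}"
  have "is_ideal ?C"
    unfolding is_ideal_def
  proof (intro conjI ballI allI)
    show "0 \<in> ?C" by (rule CollectI, rule exI[of _ "\<lambda>_. 0"]) simp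
  next
    fix a b assume "a \<in> ?C" "b \<in> ?C"
    then obtain ya yb where "a = (\<Sum>k<N. g k * ya k)" "b = (\<Sum>k<N. g k * yb k)" by blast
    then have "a + b = (\<Sum>k<N. g k * (ya k + yb k))" by (simp add: sum.distrib algebra_simps)
    then show "a + b \<in> ?C" by (intro CollectI exI[of _ "\<lambda>k. ya k + yb k"]) simp
  next
    fix a r assume "a \<in> ?C"
    then obtain y where "a = (\<Sum>k<N. g k * y k)" by blast
    then have "r * a = (\<Sum>k<N. g k * (r * y k))" by (simp add: sum_distrib_left algebra_simps)
    then show "r * a \<in> ?C" by (intro CollectI exI[of _ "\<lambda>k. r * y k"]) simp
  qed
  moreover have "g k \<in> ?C" if "k < N" for k
  proof -
    have "g k = (\<Sum>i<N. g i * (if i = k then 1 else 0))"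
      using that by (simp add: if_distrib cong: if_cong)
    then show ?thesis by (intro CollectI exI[of _ "\<lambda>i. if i = k then 1 else 0"]) simp
  qed
  ultimately show "ideal_gen (g ` {..<N}) \<subseteq> ?C" by (intro ideal_gen_least) auto
  show "?C \<subseteq> ideal_gen (g ` {..<N})"
    using ideal_gen_subset[of "g ` {..<N}"]
    by (auto intro!: ideal_sum[OF is_ideal_ideal_gen] ideal_mult_right[OF is_ideal_ideal_gen])
qed

definition backward_diff :: "(nat \<Rightarrow> 'a::ab_group_add) \<Rightarrow> nat \<Rightarrow> 'a" where
  "backward_diff c j = c j - (if j = 0 then 0 else c (j - 1))"

lemma sum_backward_diff: "(\<Sum>k<N. backward_diff c k) = (if N = 0 then 0 else c (N - 1))"
  by (induction N) (auto simp: backward_diff_def)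

lemma backward_diff_partial_sums:
  fixes q :: "nat \<Rightarrow> 'a::ab_group_add"
  assumes "(\<Sum>i<r. q i) = 0" "j < r"
  shows "backward_diff (\<lambda>k. if k < r - 1 then \<Sum>i\<le>k. q i else 0) j = q j"
proof -
  have partial: "(if k < r - 1 then \<Sum>i\<le>k. q i else 0) = (\<Sum>i\<le>k. q i)" if "k < r" for k
  proof (cases "k < r - 1")
    case False
    with that have "r = Suc k" by simp
    then have "(\<Sum>i\<le>k. q i) = (\<Sum>i<r. q i)" by (simp add: lessThan_Suc_atMost)
    with False assms(1) show ?thesis by simp
  qed simp
  show ?thesis
  proof (cases j)
    case 0
    with assms(2) partial[of 0] show ?thesis by (simp add: backward_diff_def)
  next
    case (Suc i)
    with assms(2) partial[of i] partial[of "Suc i"] show ?thesis by (simp add: backward_diff_def)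
  qed
qed

lemma eq_0_if_backward_diff_eq_0:
  assumes diff: "\<And>j. j < r \<Longrightarrow> backward_diff c j = 0" and high: "\<And>k. r - 1 \<le> k \<Longrightarrow> c k = 0"
  shows "c k = 0"
proof (induction k)
  case 0
  show ?case
  proof (cases "0 < r")
    case True
    then show ?thesis using diff[of 0] by (simp add: backward_diff_def)
  qed (use high in simp)
next
  case (Suc k)
  show ?case
  proof (cases "Suc k < r")
    case True
    then show ?thesis using diff[of "Suc k"] Suc.IH by (simp add: backward_diff_def)
  qed (use high in simp)
qed

text \<open>The resolution \<open>0 \<rightarrow> S\<^bsup>r-1\<^esup> \<rightarrow> S\<^bsup>r\<^esup> \<rightarrow> S\<close> of the cover ideal, for a list \<open>L\<close> of
  its \<open>r\<close> minimal covers: the first differential is the row of the generators \<open>m\<^sub>k = \<Prod> L ! k\<close>,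
  and column \<open>k\<close> of the second one is \<open>u\<^sub>k e\<^sub>k - u\<^sub>k\<^sub>+\<^sub>1 e\<^sub>k\<^sub>+\<^sub>1\<close> with \<open>u\<^sub>k = \<Prod> - (L ! k)\<close>.\<close>

definition cover_gen :: "'v::finite set list \<Rightarrow> nat \<Rightarrow> ('v, 'k::field) mpoly" where
  "cover_gen L k = (\<Prod>v\<in>L ! k. Var v)"

definition cover_cogen :: "'v::finite set list \<Rightarrow> nat \<Rightarrow> ('v, 'k::field) mpoly" where
  "cover_cogen L k = (\<Prod>v\<in>- (L ! k). Var v)"

definition res_rank :: "'a list \<Rightarrow> nat \<Rightarrow> nat" where
  "res_rank L i = (if i = 0 then 1 else if i = 1 then length L else length L - 1)"

definition res_diff :: "'v::finite set list \<Rightarrow> nat \<Rightarrow> nat \<Rightarrow> nat \<Rightarrow> ('v, 'k::field) mpoly" where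
  "res_diff L i j k =
    (if i = 1 then cover_gen L k
     else if i = 2 then (if j = k then cover_cogen L k else if j = Suc k then - cover_cogen L j else 0)
     else 0)"

lemma cover_cogen_times_cover_gen: "cover_cogen L k * cover_gen L k = (\<Prod>v\<in>UNIV. Var v)"
  unfolding cover_cogen_def cover_gen_def by (subst prod.union_disjoint[symmetric]) auto

lemma mat_app_res_diff_1:
  "mat_app 1 r (res_diff L 1) x = (\<lambda>j. if j = 0 then \<Sum>k<r. cover_gen L k * x k else 0)"
  by (auto simp: mat_app_def res_diff_def)

lemma mat_app_res_diff_2:
  fixes c :: "nat \<Rightarrow> ('v::finite, 'k::field) mpoly"
  assumes c: "c \<in> free_mod (r - 1)"
  shows "mat_app r (r - 1) (res_diff L 2) c =
    (\<lambda>j. if j < r then cover_cogen L j * backward_diff c j else 0)"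
proof -
  have "(\<Sum>k<r - 1. res_diff L 2 j k * c k) = cover_cogen L j * backward_diff c j" if "j < r" for j
  proof -
    have "(\<Sum>k<r - 1. res_diff L 2 j k * c k) =
        (\<Sum>k<r - 1. if k = j then cover_cogen L j * c j else 0) +
        (\<Sum>k<r - 1. if Suc k = j then - (cover_cogen L j * c k) else 0)"
      by (subst sum.distrib[symmetric]) (intro sum.cong refl, auto simp: res_diff_def)
    also have "(\<Sum>k<r - 1. if k = j then cover_cogen L j * c j else 0) = cover_cogen L j * c j"
      using c by (cases "j < r - 1") (simp_all add: free_mod_def)
    also have "(\<Sum>k<r - 1. if Suc k = j then - (cover_cogen L j * c k) else 0) =
        (if j = 0 then 0 else - (cover_cogen L j * c (j - 1)))"
      using that by (cases j) (auto simp: sum.delta)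
    finally show ?thesis by (simp add: backward_diff_def algebra_simps)
  qed
  then show ?thesis by (auto simp: mat_app_def)
qed

lemma kernel_at_1:
  "kernel_at I r d 1 = {x \<in> free_mod (r 1). mat_app (r 0) (r 1) (d 1) x = (\<lambda>_. 0)}"
  by (simp add: kernel_at_def)

lemma kernel_at_2:
  "kernel_at I r d 2 = {x \<in> free_mod (r 2). mat_app (r 1) (r 2) (d 2) x = (\<lambda>_. 0)}"
  by (simp add: kernel_at_def)

lemma image_at_1: "image_at r d 1 = mat_app (r 0) (r 1) (d 1) ` free_mod (r 1)"
  by (simp add: image_at_def)

lemma image_at_2: "image_at r d 2 = mat_app (r 1) (r 2) (d 2) ` free_mod (r 2)"
  by (simp add: image_at_def)

lemma res_rank_simps: "res_rank L 0 = 1" "res_rank L 1 = length L" "res_rank L 2 = length L - 1"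
  by (simp_all add: res_rank_def)

context
  fixes E :: "'v::finite set set" and L :: "'v set list"
  assumes set_L: "set L = {C. min_vertex_cover E C}"
    and Compl_L: "\<And>j k. j < length L \<Longrightarrow> k < length L \<Longrightarrow> j \<noteq> k \<Longrightarrow> - (L ! j) \<subseteq> L ! k"
begin

text \<open>Keep the homological degrees \<open>1\<close> and \<open>2\<close> as numerals, so that \<open>kernel_at_1\<close>, \<open>image_at_2\<close>,
  \<open>\<dots>\<close> remain applicable after simplification.\<close>
declare One_nat_def [simp del]

lemma cover_ideal_eq_combinations:
  "(cover_ideal E :: ('v, 'k::field) mpoly set) = {\<Sum>k<length L. cover_gen L k * y k | y. True}"
proof -
  have "{\<Prod>v\<in>C. Var v | C. min_vertex_cover E C} = (\<lambda>C. \<Prod>v\<in>C. Var v :: ('v, 'k) mpoly) ` set L"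
    using set_L by auto
  also have "\<dots> = cover_gen L ` {..<length L}"
    by (auto simp: cover_gen_def in_set_conv_nth image_iff) (use nth_mem in blast)
  finally show ?thesis
    unfolding cover_ideal_def by (simp add: ideal_gen_image_eq_combinations)
qed

text \<open>Since the complement of \<open>L ! j\<close> lies in every other cover, all terms but the \<open>j\<close>-th
  of a syzygy are divisible by \<open>u\<^sub>j\<close>, hence so is \<open>m\<^sub>j x\<^sub>j\<close>; and \<open>u\<^sub>j\<close> is coprime to \<open>m\<^sub>j\<close>.\<close>

lemma cover_cogen_dvd_syzygy:
  fixes x :: "nat \<Rightarrow> ('v, 'k::field) mpoly"
  assumes syz: "(\<Sum>k<length L. cover_gen L k * x k) = 0" and j: "j < length L"
  shows "\<exists>q. x j = cover_cogen L j * q"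
proof -
  let ?e = "set_exp (- (L ! j))"
  let ?U = "monomial_ideal {n. exp_dvd ?e n} :: ('v, 'k) mpoly set"
  have U: "is_ideal ?U"
    by (rule is_ideal_monomial_ideal) (auto simp: exp_upward_closed_def intro: exp_dvd_trans)
  have gen_in_U: "cover_gen L k \<in> ?U" if "k < length L" "k \<noteq> j" for k
    using Compl_L[OF j that(1) that(2)[symmetric]]
    by (simp add: cover_gen_def prod_Var_eq_single monomial_ideal_def exp_dvd_set_exp_iff keys_set_exp)
  have "cover_gen L j * x j = - (\<Sum>k\<in>{..<length L} - {j}. cover_gen L k * x k)"
    using syz j by (simp add: sum.remove eq_neg_iff_add_eq_0)
  also have "\<dots> \<in> ?U"
    using gen_in_U by (intro ideal_uminus[OF U] ideal_sum[OF U] ideal_mult_right[OF U]) auto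
  finally have in_U: "keys (cover_gen L j * x j) \<subseteq> {n. exp_dvd ?e n}"
    by (simp add: monomial_ideal_def)
  have "\<forall>n\<in>keys (x j). exp_dvd ?e n"
  proof
    fix n assume "n \<in> keys (x j)"
    then have "set_exp (L ! j) + n \<in> keys (cover_gen L j * x j)"
      using keys_single_times[of 1 "set_exp (L ! j)" "x j"] by (simp add: cover_gen_def prod_Var_eq_single)
    with in_U have "exp_dvd ?e (set_exp (L ! j) + n)" by blast
    then have "- (L ! j) \<subseteq> L ! j \<union> keys n"
      by (simp add: exp_dvd_set_exp_iff keys_add_exp keys_set_exp)
    then show "exp_dvd ?e n" by (auto simp: exp_dvd_set_exp_iff)
  qed
  then show ?thesis
    using single_factor_of_exp_dvd by (simp add: cover_cogen_def prod_Var_eq_single)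
qed

lemma kernel_at_0_res:
  "kernel_at (cover_ideal E :: ('v, 'k::field) mpoly set) (res_rank L) (res_diff L) 0 =
    image_at (res_rank L) (res_diff L) 1"
  (is "?K = _")
proof -
  let ?r = "length L"
  have "?K = mat_app 1 ?r (res_diff L 1) ` free_mod ?r"
  proof
    show "?K \<subseteq> mat_app 1 ?r (res_diff L 1) ` free_mod ?r"
    proof
      fix x assume "x \<in> ?K"
      then have x: "x \<in> free_mod 1" "x 0 \<in> cover_ideal E" by (auto simp: kernel_at_def)
      then obtain y where y: "x 0 = (\<Sum>k<?r. cover_gen L k * y k)"
        using cover_ideal_eq_combinations by blast
      define y' where "y' = (\<lambda>k. if k < ?r then y k else 0)"
      have "y' \<in> free_mod ?r" by (simp add: free_mod_def y'_def)
      moreover have "x = mat_app 1 ?r (res_diff L 1) y'"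
        using x(1) y by (auto simp: mat_app_res_diff_1 free_mod_def y'_def fun_eq_iff)
      ultimately show "x \<in> mat_app 1 ?r (res_diff L 1) ` free_mod ?r" by blast
    qed
    show "mat_app 1 ?r (res_diff L 1) ` free_mod ?r \<subseteq> ?K"
      using cover_ideal_eq_combinations
      by (auto simp: kernel_at_def mat_app_res_diff_1 free_mod_def)
  qed
  then show ?thesis by (simp only: image_at_1 res_rank_simps)
qed

lemma syzygy_in_image_res_diff_2:
  fixes x :: "nat \<Rightarrow> ('v, 'k::field) mpoly"
  assumes x: "x \<in> free_mod (length L)" and syz: "(\<Sum>k<length L. cover_gen L k * x k) = 0"
  shows "x \<in> mat_app (length L) (length L - 1) (res_diff L 2) ` free_mod (length L - 1)"
proof -
  let ?r = "length L" and ?M = "\<Prod>v\<in>UNIV. Var v :: ('v, 'k) mpoly"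
  obtain q where q: "\<And>j. j < ?r \<Longrightarrow> x j = cover_cogen L j * q j"
    using cover_cogen_dvd_syzygy[OF syz] by metis
  have "cover_gen L j * x j = ?M * q j" if "j < ?r" for j
  proof -
    have "cover_gen L j * x j = (cover_cogen L j * cover_gen L j) * q j"
      using q[OF that] by (simp add: ac_simps)
    then show ?thesis by (simp only: cover_cogen_times_cover_gen)
  qed
  then have "(\<Sum>j<?r. cover_gen L j * x j) = ?M * (\<Sum>j<?r. q j)"
    by (simp add: sum_distrib_left)
  moreover have "?M \<noteq> 0" by (rule prod_Var_neq_0)
  ultimately have "(\<Sum>j<?r. q j) = 0" using syz by (simp add: mpoly_mult_eq_0_iff)
  define c where "c = (\<lambda>k. if k < ?r - 1 then \<Sum>i\<le>k. q i else 0)"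
  have "c \<in> free_mod (?r - 1)" by (simp add: free_mod_def c_def)
  moreover have "mat_app ?r (?r - 1) (res_diff L 2) c = x"
    unfolding mat_app_res_diff_2[OF \<open>c \<in> free_mod (?r - 1)\<close>]
    using x q backward_diff_partial_sums[OF \<open>(\<Sum>j<?r. q j) = 0\<close>]
    by (auto simp: fun_eq_iff free_mod_def c_def)
  ultimately show ?thesis by blast
qed

lemma kernel_at_1_res:
  "kernel_at (cover_ideal E :: ('v, 'k::field) mpoly set) (res_rank L) (res_diff L) 1 =
    image_at (res_rank L) (res_diff L) 2"
proof -
  let ?r = "length L" and ?M = "\<Prod>v\<in>UNIV. Var v :: ('v, 'k) mpoly"
  have "mat_app 1 ?r (res_diff L 1) x = (\<lambda>_. 0) \<longleftrightarrow> (\<Sum>k<?r. cover_gen L k * x k) = 0"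
    for x :: "nat \<Rightarrow> ('v, 'k) mpoly"
    using fun_at_0_eq_iff[of "\<Sum>k<?r. cover_gen L k * x k" 0] by (simp add: mat_app_res_diff_1)
  then have K: "kernel_at (cover_ideal E :: ('v, 'k) mpoly set) (res_rank L) (res_diff L) 1 =
      {x \<in> free_mod ?r. (\<Sum>k<?r. cover_gen L k * x k) = 0}"
    by (simp only: kernel_at_1 res_rank_simps)
  have image: "image_at (res_rank L) (res_diff L) 2 =
      mat_app ?r (?r - 1) (res_diff L 2) ` free_mod (?r - 1)"
    by (simp only: image_at_2 res_rank_simps)
  have "mat_app ?r (?r - 1) (res_diff L 2) c \<in> {x \<in> free_mod ?r. (\<Sum>k<?r. cover_gen L k * x k) = 0}"
    if c: "c \<in> free_mod (?r - 1)" for c :: "nat \<Rightarrow> ('v, 'k) mpoly"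
  proof -
    let ?x = "mat_app ?r (?r - 1) (res_diff L 2) c"
    have "cover_gen L k * ?x k = ?M * backward_diff c k" if "k < ?r" for k
    proof -
      have "cover_gen L k * ?x k = (cover_cogen L k * cover_gen L k) * backward_diff c k"
        using that by (simp add: mat_app_res_diff_2[OF c] ac_simps)
      then show ?thesis by (simp only: cover_cogen_times_cover_gen)
    qed
    then have "(\<Sum>k<?r. cover_gen L k * ?x k) = ?M * (\<Sum>k<?r. backward_diff c k)"
      by (simp add: sum_distrib_left)
    also have "\<dots> = 0" using c by (simp add: sum_backward_diff free_mod_def)
    finally show ?thesis by (simp add: mat_app_res_diff_2[OF c] free_mod_def)
  qed
  with syzygy_in_image_res_diff_2 show ?thesis unfolding K image by blast
qed

lemma kernel_at_2_res:
  "kernel_at (cover_ideal E :: ('v, 'k::field) mpoly set) (res_rank L) (res_diff L) 2 = {\<lambda>_. 0}"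
proof -
  let ?r = "length L"
  have "c = (\<lambda>_. 0)" if c: "c \<in> free_mod (?r - 1)"
    and zero: "mat_app ?r (?r - 1) (res_diff L 2) c = (\<lambda>_. 0)" for c :: "nat \<Rightarrow> ('v, 'k) mpoly"
  proof -
    have "backward_diff c j = 0" if "j < ?r" for j
    proof -
      have "cover_cogen L j * backward_diff c j = 0"
        using fun_cong[OF zero, of j] that by (simp add: mat_app_res_diff_2[OF c])
      then show ?thesis by (simp add: mpoly_mult_eq_0_iff cover_cogen_def prod_Var_neq_0)
    qed
    with c show ?thesis by (auto simp: free_mod_def intro: eq_0_if_backward_diff_eq_0)
  qed
  moreover have "(\<lambda>_. 0) \<in> free_mod (?r - 1)" by (simp add: free_mod_def)
  moreover have "mat_app ?r (?r - 1) (res_diff L 2) (\<lambda>_. 0 :: ('v, 'k) mpoly) = (\<lambda>_. 0)"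
    by (auto simp: mat_app_def)
  ultimately show ?thesis unfolding kernel_at_2 res_rank_simps by blast
qed

lemma is_free_resolution_cover_ideal:
  "is_free_resolution (cover_ideal E :: ('v, 'k::field) mpoly set) 2 (res_rank L) (res_diff L)"
  unfolding is_free_resolution_def
proof (intro conjI allI impI)
  fix i :: nat assume "i < 2"
  then consider "i = 0" | "i = 1" by linarith
  then show "kernel_at (cover_ideal E :: ('v, 'k) mpoly set) (res_rank L) (res_diff L) i =
      image_at (res_rank L) (res_diff L) (Suc i)"
    using kernel_at_0_res kernel_at_1_res by cases (simp_all add: One_nat_def[symmetric])
qed (simp_all add: res_rank_simps kernel_at_2_res)

end

lemma proj_dim_quot_cover_ideal:
  assumes G: "simple_graph E" and "E \<noteq> {}" and dom: "every_edge_dominating E"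
  shows "proj_dim_quot (cover_ideal E :: ('v::finite, 'k::field) mpoly set) = 2"
proof (rule antisym)
  obtain L where L: "set L = {C. min_vertex_cover E C}" "distinct L"
    using finite_distinct_list[of "{C. min_vertex_cover E C}"] by auto
  have "- (L ! j) \<subseteq> L ! k" if "j < length L" "k < length L" "j \<noteq> k" for j k
  proof (rule min_vertex_cover_Compl_subset[OF G dom])
    show "min_vertex_cover E (L ! j)" "min_vertex_cover E (L ! k)"
      using that L(1) nth_mem by blast+
    show "L ! j \<noteq> L ! k" using that L(2) by (simp add: nth_eq_iff_index_eq)
  qed
  with L(1) have "is_free_resolution (cover_ideal E :: ('v, 'k) mpoly set) 2 (res_rank L) (res_diff L)"
    by (rule is_free_resolution_cover_ideal)
  then show "proj_dim_quot (cover_ideal E :: ('v, 'k) mpoly set) \<le> 2"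
    unfolding proj_dim_quot_def by (intro INF_lower2[of 2]) (auto simp: numeral_eq_enat)
  show "2 \<le> proj_dim_quot (cover_ideal E :: ('v, 'k) mpoly set)"
    by (rule two_le_proj_dim_quot[OF cover_ideal_not_principal[OF G \<open>E \<noteq> {}\<close>]])
qed

lemma cohen_macaulay_cover_ideal:
  assumes "simple_graph E" "E \<noteq> {}" "every_edge_dominating E"
  shows "cohen_macaulay (cover_ideal E :: ('v::finite, 'k::field) mpoly set)"
  using assms by (simp add: cohen_macaulay_def proj_dim_quot_cover_ideal height_cover_ideal)

theorem corollary3p11:
  fixes E :: "('v::finite) set set"
  assumes "simple_graph E"
    and "v_number (cover_ideal E :: ('v, 'k::field) mpoly set) = enat (card (UNIV :: 'v set) - 2)"
  shows "cohen_macaulay (cover_ideal E :: ('v, 'k) mpoly set)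
       \<and> (\<forall>P\<in>Ass (cover_ideal E :: ('v, 'k) mpoly set).
           v_number_at (cover_ideal E) P = enat (card (UNIV :: 'v set) - 2))
       \<and> (\<forall>P\<in>Ass (cover_ideal E :: ('v, 'k) mpoly set).
           \<exists>g. colon (cover_ideal E) P = {a + h * g | a h. a \<in> cover_ideal E})"
proof (intro conjI ballI)
  have "E \<noteq> {}"
  proof
    assume "E = {}"
    with assms(2) show False using v_number_cover_ideal_empty[where 'v='v and 'k='k] by simp
  qed
  moreover have dom: "every_edge_dominating E" by (rule every_edge_dominating_if_v_number[OF assms])
  ultimately show "cohen_macaulay (cover_ideal E :: ('v, 'k) mpoly set)"
    by (rule cohen_macaulay_cover_ideal[OF assms(1)])
  fix P assume P: "P \<in> Ass (cover_ideal E :: ('v, 'k) mpoly set)"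
  show "v_number_at (cover_ideal E) P = enat (card (UNIV :: 'v set) - 2)"
    using v_number_at_cover_ideal_le[OF assms(1) P] v_number_le_v_number_at[OF P] assms(2) by simp
  obtain e where e: "e \<in> E" "P = var_ideal e" using P Ass_cover_ideal[OF assms(1)] by auto
  then have "colon (cover_ideal E) P =
      {a + h * (\<Prod>v\<in>-e. Var v) | a h. a \<in> (cover_ideal E :: ('v, 'k) mpoly set)}"
    by (simp add: colon_cover_ideal_var_ideal[OF assms(1)] Inter_var_ideal_other_edges[OF assms(1) dom])
  then show "\<exists>g. colon (cover_ideal E) P = {a + h * g | a h. a \<in> cover_ideal E}" ..
qed

end
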